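(* Let $0<\alpha<2$, $0<|\rho_1|,|\rho_2|<1$, and let $(\boldsymbol{\varepsilon}_t)_{t\in\mathbb{Z}}=((\varepsilon_{1,t},\varepsilon_{2,t}))_t$ be i.i.d. symmetric $\alpha$-stable random vectors in $\mathbb{R}^2$ with spectral measure $\Gamma_2$ on the Euclidean unit circle $S_2$ and zero shift. Let $X_{1,t}=\sum_{k\ge0}\rho_1^k\varepsilon_{1,t+k}$ and $X_{2,t}=\sum_{k\ge0}\rho_2^k\varepsilon_{2,t-k}$ (the stationary solutions of $X_{1,t}=\rho_1X_{1,t+1}+\varepsilon_{1,t}$ and $X_{2,t}=\rho_2X_{2,t-1}+\varepsilon_{2,t}$), and $\underline{\boldsymbol{X}}_t=(X_{1,t},X_{2,t},X_{1,t+1},X_{2,t+1})$. Let $\|\cdot\|$ be the seminorm on $\mathbb{R}^4$ given by $\|(x_1,x_2,x_3,x_4)\|=\sqrt{x_1^2+x_2^2}$, with unit cylinder $C_4^{\|\cdot\|}$. Then $\underline{\boldsymbol{X}}_t$ is S$\alpha$S, and it is representable on $C_4^{\|\cdot\|}$ if and only if $\Gamma_2(\{(0,-1),(0,1)\})=0$.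
   Context: An S$\alpha$S vector $\boldsymbol{\varepsilon}$ in $\mathbb{R}^2$ with spectral measure $\Gamma_2$ (a finite symmetric measure on $S_2=\{s\in\mathbb{R}^2:\|s\|_e=1\}$) has characteristic function $\mathbb{E}e^{i\langle u,\boldsymbol{\varepsilon}\rangle}=\exp\{-\int_{S_2}|\langle u,s\rangle|^\alpha\Gamma_2(ds)\}$. $C_4^{\|\cdot\|}=\{s\in\mathbb{R}^4:\|s\|=1\}$. An S$\alpha$S vector $X$ in $\mathbb{R}^d$ is representable on $C_d^{\|\cdot\|}$ if there is a symmetric Borel measure $\Gamma^{\|\cdot\|}$ on $C_d^{\|\cdot\|}$ with $\int|\langle u,s\rangle|^\alpha\Gamma^{\|\cdot\|}(ds)<\infty$ for all $u$ and $\mathbb{E}e^{i\langle u,X\rangle}=\exp\{-\int_{C_d^{\|\cdot\|}}|\langle u,s\rangle|^\alpha\Gamma^{\|\cdot\|}(ds)\}$ for all $u\in\mathbb{R}^d$. *)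

theory Defs
  imports "HOL-Probability.Probability"
begin

definition char_fun_vec :: "'a measure \<Rightarrow> ('a \<Rightarrow> 'b::euclidean_space) \<Rightarrow> 'b \<Rightarrow> complex" where
  "char_fun_vec M X u = integral\<^sup>L M (\<lambda>\<omega>. cis (inner u (X \<omega>)))"

definition sym_borel_measure_on :: "'b::euclidean_space set \<Rightarrow> 'b measure \<Rightarrow> bool" where
  "sym_borel_measure_on C \<Gamma> \<longleftrightarrow>
     sets \<Gamma> = sets borel \<and> C \<in> sets borel \<and> emeasure \<Gamma> (- C) = 0 \<and>
     (\<forall>A\<in>sets borel. emeasure \<Gamma> (uminus ` A) = emeasure \<Gamma> A)"

definition represents_on ::
  "'b::euclidean_space set \<Rightarrow> real \<Rightarrow> 'b measure \<Rightarrow> 'a measure \<Rightarrow> ('a \<Rightarrow> 'b) \<Rightarrow> bool" where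
  "represents_on C \<alpha> \<Gamma> M X \<longleftrightarrow>
     X \<in> borel_measurable M \<and> sym_borel_measure_on C \<Gamma> \<and>
     (\<forall>u. (\<integral>\<^sup>+ s. ennreal (\<bar>inner u s\<bar> powr \<alpha>) \<partial>\<Gamma>) < \<infinity>) \<and>
     (\<forall>u. char_fun_vec M X u =
            complex_of_real (exp (- enn2real (\<integral>\<^sup>+ s. ennreal (\<bar>inner u s\<bar> powr \<alpha>) \<partial>\<Gamma>))))"

definition SaS_spectral :: "real \<Rightarrow> 'b::euclidean_space measure \<Rightarrow> 'a measure \<Rightarrow> ('a \<Rightarrow> 'b) \<Rightarrow> bool" where
  "SaS_spectral \<alpha> \<Gamma> M X \<longleftrightarrow> finite_measure \<Gamma> \<and> represents_on (sphere 0 1) \<alpha> \<Gamma> M X"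

definition SaS :: "real \<Rightarrow> 'a measure \<Rightarrow> ('a \<Rightarrow> 'b::euclidean_space) \<Rightarrow> bool" where
  "SaS \<alpha> M X \<longleftrightarrow> (\<exists>\<Gamma>. SaS_spectral \<alpha> \<Gamma> M X)"

definition representable_on :: "'b::euclidean_space set \<Rightarrow> real \<Rightarrow> 'a measure \<Rightarrow> ('a \<Rightarrow> 'b) \<Rightarrow> bool" where
  "representable_on C \<alpha> M X \<longleftrightarrow> (\<exists>\<Gamma>. represents_on C \<alpha> \<Gamma> M X)"

definition seminorm12 :: "real^4 \<Rightarrow> real" where
  "seminorm12 x = sqrt ((x $ 1)\<^sup>2 + (x $ 2)\<^sup>2)"

definition cyl4 :: "(real^4) set" where
  "cyl4 = {x. seminorm12 x = 1}"

definition X1_proc :: "real \<Rightarrow> (int \<Rightarrow> 'a \<Rightarrow> real^2) \<Rightarrow> int \<Rightarrow> 'a \<Rightarrow> real" where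
  "X1_proc \<rho> \<epsilon> t \<omega> = (\<Sum>k. \<rho> ^ k * (\<epsilon> (t + int k) \<omega> $ 1))"

definition X2_proc :: "real \<Rightarrow> (int \<Rightarrow> 'a \<Rightarrow> real^2) \<Rightarrow> int \<Rightarrow> 'a \<Rightarrow> real" where
  "X2_proc \<rho> \<epsilon> t \<omega> = (\<Sum>k. \<rho> ^ k * (\<epsilon> (t - int k) \<omega> $ 2))"

end

theory Submission
  imports Defs
begin

text \<open>
  Both coordinates of \<open>X\<^sub>t\<close> are linear in the noise: \<open>X\<^sub>t = \<Sum>\<^sub>m A\<^sub>m \<epsilon>\<^sub>m\<close> with linear maps
  \<open>A\<^sub>m : \<real>\<^sup>2 \<rightarrow> \<real>\<^sup>4\<close> whose norms decay geometrically in \<open>\<bar>m - t\<bar>\<close>; the series converge almost surely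
  by Borel--Cantelli and the tail bound of stable laws. By independence,
  \<open>E exp(i\<langle>u, X\<^sub>t\<rangle>) = exp(- \<integral>\<bar>\<langle>u, x\<rangle>\<bar>\<^sup>\<alpha> \<Lambda>(dx))\<close> with \<open>\<Lambda> = \<Sum>\<^sub>m (A\<^sub>m)\<^sub>*\<Gamma>\<^sub>2\<close>.
  For an absolutely homogeneous \<open>N\<close>, pushing \<open>N\<^sup>\<alpha> \<Lambda>\<close> radially onto \<open>{N = 1}\<close> keeps the
  \<open>\<alpha>\<close>-moments of \<open>\<Lambda>\<close> off \<open>{N = 0}\<close>. For the Euclidean norm this shows that \<open>X\<^sub>t\<close> is
  symmetric \<open>\<alpha>\<close>-stable. For \<open>N = \<parallel>\<cdot>\<parallel>\<close> nothing is lost unless \<open>\<Lambda>\<close> charges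
  \<open>{x\<^sub>1 = x\<^sub>2 = 0} - {0}\<close>, which happens only through \<open>A\<^sub>t\<^sub>+\<^sub>1 (0, \<plusminus>1) = (0, 0, 0, \<plusminus>1)\<close>, i.e.
  when \<open>\<Gamma>\<^sub>2\<close> charges the poles \<open>(0, \<plusminus>1)\<close>.

  Conversely, the function \<open>u \<mapsto> \<integral>\<bar>\<langle>u, x\<rangle>\<bar>\<^sup>\<alpha> \<Gamma>(dx)\<close> determines, through its second differences
  along \<open>n v\<close> as \<open>n \<rightarrow> \<infinity>\<close>, the \<open>\<alpha>\<close>-moments of \<open>\<Gamma>\<close> on the hyperplane \<open>v\<^sup>\<bottom>\<close>. A representing
  measure on the cylinder vanishes on \<open>{x\<^sub>1 = x\<^sub>2 = 0}\<close>, whereas there the \<open>\<alpha>\<close>-moment of \<open>\<Lambda>\<close>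
  in direction \<open>e\<^sub>4\<close> is at least \<open>\<Gamma>\<^sub>2(poles)\<close>.
\<close>

section \<open>Second differences of \<open>\<bar>x\<bar> powr \<alpha>\<close>\<close>

definition sym_second_diff :: "real \<Rightarrow> real \<Rightarrow> real \<Rightarrow> real" where
  "sym_second_diff \<alpha> a b = \<bar>a + b\<bar> powr \<alpha> + \<bar>a - b\<bar> powr \<alpha> - 2 * \<bar>a\<bar> powr \<alpha>"

lemma sym_second_diff_abs: "sym_second_diff \<alpha> a b = sym_second_diff \<alpha> \<bar>a\<bar> \<bar>b\<bar>"
proof -
  have "(\<bar>a+b\<bar> = \<bar>a\<bar>+\<bar>b\<bar> \<and> \<bar>a-b\<bar> = \<bar>\<bar>a\<bar>-\<bar>b\<bar>\<bar>) \<or> (\<bar>a-b\<bar> = \<bar>a\<bar>+\<bar>b\<bar> \<and> \<bar>a+b\<bar> = \<bar>\<bar>a\<bar>-\<bar>b\<bar>\<bar>)"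
    by arith
  then show ?thesis unfolding sym_second_diff_def by auto
qed

lemma abs_sym_second_diff_le_curvature:
  fixes a b \<alpha> :: real assumes "0 < \<alpha>" "\<alpha> < 2" "0 \<le> b" "2 * b < a"
  shows "\<bar>sym_second_diff \<alpha> a b\<bar> \<le> 2 * \<alpha> * \<bar>\<alpha> - 1\<bar> * b\<^sup>2 * (a/2) powr (\<alpha> - 2)"
proof (cases "b = 0")
  case True then show ?thesis by (simp add: sym_second_diff_def)
next
  case False
  then have "0 < b" using assms by auto
  define h where "h y = (a + y) powr \<alpha> + (a - y) powr \<alpha>" for y
  define h' where "h' y = \<alpha> * (a + y) powr (\<alpha> - 1) - \<alpha> * (a - y) powr (\<alpha> - 1)" for y
  have "DERIV h y :> h' y" if "0 \<le> y" "y \<le> b" for y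
    unfolding h_def h'_def using that assms by (auto intro!: derivative_eq_intros)
  from MVT2[OF \<open>0 < b\<close> this] obtain \<xi> where xi: "0 < \<xi>" "\<xi> < b" "h b - h 0 = b * h' \<xi>"
    by auto
  define g where "g x = \<alpha> * x powr (\<alpha> - 1)" for x
  define g' where "g' x = \<alpha> * ((\<alpha> - 1) * x powr (\<alpha> - 1 - 1))" for x
  have "DERIV g x :> g' x" if "a - \<xi> \<le> x" "x \<le> a + \<xi>" for x
    unfolding g_def g'_def using that xi assms by (auto intro!: derivative_eq_intros)
  moreover have "a - \<xi> < a + \<xi>" using xi by auto
  ultimately obtain \<eta> where eta: "a - \<xi> < \<eta>" "\<eta> < a + \<xi>" "g (a + \<xi>) - g (a - \<xi>) = 2 * \<xi> * g' \<eta>"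
    using MVT2[of "a - \<xi>" "a + \<xi>" g g'] by auto
  have "\<eta> powr (\<alpha> - 2) \<le> (a/2) powr (\<alpha> - 2)"
    by (rule powr_mono2') (use assms eta xi in auto)
  then have g'_le: "\<bar>g' \<eta>\<bar> \<le> \<alpha> * \<bar>\<alpha> - 1\<bar> * (a/2) powr (\<alpha> - 2)"
    unfolding g'_def using assms by (auto simp: abs_mult intro!: mult_left_mono)
  have "\<bar>sym_second_diff \<alpha> a b\<bar> = \<bar>h b - h 0\<bar>"
    unfolding h_def sym_second_diff_def using assms by simp
  also have "\<dots> = b * (2 * \<xi> * \<bar>g' \<eta>\<bar>)"
    using xi eta unfolding h'_def g_def by (simp add: abs_mult)
  also have "\<dots> \<le> b * (2 * b * (\<alpha> * \<bar>\<alpha> - 1\<bar> * (a/2) powr (\<alpha> - 2)))"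
    using xi assms g'_le by (intro mult_left_mono mult_mono) auto
  finally show ?thesis by (simp add: power2_eq_square algebra_simps)
qed

lemma abs_sym_second_diff_le:
  fixes a b \<alpha> :: real assumes "0 < \<alpha>" "\<alpha> < 2"
  shows "\<bar>sym_second_diff \<alpha> a b\<bar> \<le> (4 * 3 powr \<alpha> + 2 * \<alpha> * \<bar>\<alpha> - 1\<bar>) * \<bar>b\<bar> powr \<alpha>"
proof -
  define A B where "A = \<bar>a\<bar>" and "B = \<bar>b\<bar>"
  have AB: "0 \<le> A" "0 \<le> B" unfolding A_def B_def by auto
  have K: "0 \<le> 2 * \<alpha> * \<bar>\<alpha> - 1\<bar>" "0 \<le> 4 * 3 powr \<alpha>" using assms by auto
  have "\<bar>sym_second_diff \<alpha> A B\<bar> \<le> (4 * 3 powr \<alpha> + 2 * \<alpha> * \<bar>\<alpha> - 1\<bar>) * B powr \<alpha>"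
  proof (cases "2 * B < A")
    case True
    have "B\<^sup>2 * (A/2) powr (\<alpha> - 2) \<le> B powr \<alpha>"
    proof (cases "B = 0")
      case False
      then have "0 < B" using AB by auto
      then have "(A/2) powr (\<alpha> - 2) \<le> B powr (\<alpha> - 2)"
        by (intro powr_mono2') (use assms True in auto)
      moreover have "B powr \<alpha> = B\<^sup>2 * B powr (\<alpha> - 2)"
        using powr_add[of B 2 "\<alpha> - 2"] \<open>0 < B\<close> by (simp add: powr_numeral)
      ultimately show ?thesis by (simp add: mult_left_mono)
    qed simp
    then have "\<bar>sym_second_diff \<alpha> A B\<bar> \<le> 2 * \<alpha> * \<bar>\<alpha> - 1\<bar> * B powr \<alpha>"
      using abs_sym_second_diff_le_curvature[of \<alpha> B A] assms AB True mult_left_mono[OF _ K(1)]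
      by (smt (verit, ccfv_threshold) mult.assoc)
    then show ?thesis using K by (smt (verit) distrib_right powr_ge_zero mult_nonneg_nonneg)
  next
    case False
    have "\<bar>A + B\<bar> powr \<alpha> \<le> (3 * B) powr \<alpha>" "\<bar>A - B\<bar> powr \<alpha> \<le> (3 * B) powr \<alpha>" "\<bar>A\<bar> powr \<alpha> \<le> (3 * B) powr \<alpha>"
      using False AB assms by (auto intro!: powr_mono2)
    then have "\<bar>sym_second_diff \<alpha> A B\<bar> \<le> 4 * (3 * B) powr \<alpha>"
      unfolding sym_second_diff_def using powr_ge_zero[of _ \<alpha>] by (smt (verit))
    also have "\<dots> = 4 * 3 powr \<alpha> * B powr \<alpha>" using AB by (simp add: powr_mult)
    finally show ?thesis using K by (smt (verit) distrib_right powr_ge_zero mult_nonneg_nonneg)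
  qed
  then show ?thesis using sym_second_diff_abs[of \<alpha> a b] unfolding A_def B_def by simp
qed

lemma sym_second_diff_tendsto_0:
  fixes a b \<alpha> :: real assumes "0 < \<alpha>" "\<alpha> < 2" "a \<noteq> 0"
  shows "(\<lambda>n::nat. sym_second_diff \<alpha> (real n * a) b) \<longlonglongrightarrow> 0"
proof (rule Lim_null_comparison)
  have "LIM n sequentially. real n * (\<bar>a\<bar>/2) :> at_top"
    by (rule filterlim_at_top_mult_tendsto_pos[OF tendsto_const])
       (use assms in \<open>auto intro: filterlim_real_sequentially\<close>)
  then have "eventually (\<lambda>n. \<bar>b\<bar> < real n * (\<bar>a\<bar>/2)) sequentially"
    by (simp add: filterlim_at_top_dense)
  then show "eventually (\<lambda>n. norm (sym_second_diff \<alpha> (real n * a) b) \<le>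
      2 * \<alpha> * \<bar>\<alpha> - 1\<bar> * \<bar>b\<bar>\<^sup>2 * (real n * (\<bar>a\<bar>/2)) powr (\<alpha> - 2)) sequentially"
  proof eventually_elim
    case (elim n)
    then show ?case
      using abs_sym_second_diff_le_curvature[of \<alpha> "\<bar>b\<bar>" "\<bar>real n * a\<bar>"] assms
        sym_second_diff_abs[of \<alpha> "real n * a" b]
      by (simp add: abs_mult)
  qed
  show "(\<lambda>n::nat. 2 * \<alpha> * \<bar>\<alpha> - 1\<bar> * \<bar>b\<bar>\<^sup>2 * (real n * (\<bar>a\<bar>/2)) powr (\<alpha> - 2)) \<longlonglongrightarrow> 0"
    by (intro tendsto_mult_right_zero tendsto_neg_powr[OF _ \<open>LIM n sequentially. _ :> at_top\<close>])
       (use assms in auto)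
qed

section \<open>Restricted \<open>\<alpha>\<close>-moments\<close>

lemma enn2real_eq_imp_eq:
  fixes a b :: ennreal
  shows "enn2real a = enn2real b \<Longrightarrow> a < \<infinity> \<Longrightarrow> b < \<infinity> \<Longrightarrow> a = b"
  by (metis ennreal_enn2real infinity_ennreal_def)

definition restricted_moment :: "real \<Rightarrow> 'b::euclidean_space set \<Rightarrow> 'b measure \<Rightarrow> 'b \<Rightarrow> ennreal" where
  "restricted_moment \<alpha> S \<mu> u = (\<integral>\<^sup>+ x. ennreal (indicator S x * \<bar>inner u x\<bar> powr \<alpha>) \<partial>\<mu>)"

lemma restricted_moment_mono:
  "S \<subseteq> S' \<Longrightarrow> restricted_moment \<alpha> S \<mu> u \<le> restricted_moment \<alpha> S' \<mu> u"
  unfolding restricted_moment_def by (intro nn_integral_mono) (auto simp: indicator_def)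

lemma
  fixes \<mu> :: "'b::euclidean_space measure"
  assumes sets: "sets \<mu> = sets borel" and S: "S \<in> sets borel" and fin: "restricted_moment \<alpha> S \<mu> u < \<infinity>"
  shows integrable_restricted_moment: "integrable \<mu> (\<lambda>x. indicator S x * \<bar>inner u x\<bar> powr \<alpha>)"
    and restricted_moment_eq_integral:
      "enn2real (restricted_moment \<alpha> S \<mu> u) = (\<integral>x. indicator S x * \<bar>inner u x\<bar> powr \<alpha> \<partial>\<mu>)"
proof -
  have meas: "(\<lambda>x. indicator S x * \<bar>inner u x\<bar> powr \<alpha>) \<in> borel_measurable \<mu>"
    using S by (simp add: measurable_cong_sets[OF sets refl])
  then show "integrable \<mu> (\<lambda>x. indicator S x * \<bar>inner u x\<bar> powr \<alpha>)"
    using fin unfolding restricted_moment_def by (intro integrableI_nonneg) auto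
  show "enn2real (restricted_moment \<alpha> S \<mu> u) = (\<integral>x. indicator S x * \<bar>inner u x\<bar> powr \<alpha> \<partial>\<mu>)"
    unfolding restricted_moment_def using meas by (subst integral_eq_nn_integral) auto
qed

lemma restricted_moment_second_diff:
  fixes \<mu> :: "'b::euclidean_space measure"
  assumes sets: "sets \<mu> = sets borel" and S: "S \<in> sets borel"
    and fin: "\<And>u. restricted_moment \<alpha> S \<mu> u < \<infinity>"
  defines "R \<equiv> \<lambda>u. enn2real (restricted_moment \<alpha> S \<mu> u)"
  shows "R (c *\<^sub>R v + w) + R (c *\<^sub>R v - w) - 2 * R (c *\<^sub>R v) =
           (\<integral>x. indicator S x * sym_second_diff \<alpha> (c * inner v x) (inner w x) \<partial>\<mu>)"
proof -
  let ?f = "\<lambda>u x. indicator S x * \<bar>inner u x\<bar> powr \<alpha>"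
  note int = integrable_restricted_moment[OF sets S fin]
  have "R (c *\<^sub>R v + w) + R (c *\<^sub>R v - w) - 2 * R (c *\<^sub>R v) =
      (\<integral>x. ?f (c *\<^sub>R v + w) x + ?f (c *\<^sub>R v - w) x - 2 * ?f (c *\<^sub>R v) x \<partial>\<mu>)"
    unfolding R_def restricted_moment_eq_integral[OF sets S fin]
    by (simp only: Bochner_Integration.integral_diff[OF Bochner_Integration.integrable_add[OF int int]
          integrable_mult_right[OF int]] Bochner_Integration.integral_add[OF int int] integral_mult_right_zero)
  also have "\<dots> = (\<integral>x. indicator S x * sym_second_diff \<alpha> (c * inner v x) (inner w x) \<partial>\<mu>)"
    by (intro Bochner_Integration.integral_cong)
       (auto simp: sym_second_diff_def inner_add_left inner_diff_left algebra_simps)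
  finally show ?thesis .
qed

text \<open>Along \<open>n v\<close>, \<open>n \<rightarrow> \<infinity>\<close>, the second differences of the moment function die out except on \<open>v\<^sup>\<bottom>\<close>.\<close>
lemma tendsto_restricted_moment_second_diff:
  fixes \<mu> :: "'b::euclidean_space measure"
  assumes sets: "sets \<mu> = sets borel" and S: "S \<in> sets borel"
    and fin: "\<And>u. restricted_moment \<alpha> S \<mu> u < \<infinity>" and \<alpha>: "0 < \<alpha>" "\<alpha> < 2"
  defines "R \<equiv> \<lambda>u. enn2real (restricted_moment \<alpha> S \<mu> u)"
  shows "(\<lambda>n::nat. R (real n *\<^sub>R v + w) + R (real n *\<^sub>R v - w) - 2 * R (real n *\<^sub>R v))
          \<longlonglongrightarrow> 2 * enn2real (restricted_moment \<alpha> (S \<inter> {x. inner v x = 0}) \<mu> w)"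
proof -
  let ?S' = "S \<inter> {x. inner v x = 0}"
  have S': "?S' \<in> sets borel" using S by measurable
  have fin': "restricted_moment \<alpha> ?S' \<mu> w < \<infinity>"
    using restricted_moment_mono[of ?S' S] fin by (blast intro: le_less_trans)
  define K where "K = 4 * 3 powr \<alpha> + 2 * \<alpha> * \<bar>\<alpha> - 1\<bar>"
  have "(\<lambda>n. \<integral>x. indicator S x * sym_second_diff \<alpha> (real n * inner v x) (inner w x) \<partial>\<mu>) \<longlonglongrightarrow>
     (\<integral>x. 2 * (indicator ?S' x * \<bar>inner w x\<bar> powr \<alpha>) \<partial>\<mu>)"
  proof (rule integral_dominated_convergence[where w = "\<lambda>x. K * (indicator S x * \<bar>inner w x\<bar> powr \<alpha>)"])
    show "(\<lambda>x. 2 * (indicator ?S' x * \<bar>inner w x\<bar> powr \<alpha>)) \<in> borel_measurable \<mu>"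
      using S' by (simp add: measurable_cong_sets[OF sets refl])
    show "(\<lambda>x. indicator S x * sym_second_diff \<alpha> (real n * inner v x) (inner w x)) \<in> borel_measurable \<mu>" for n
      using S by (simp add: measurable_cong_sets[OF sets refl] sym_second_diff_def)
    show "integrable \<mu> (\<lambda>x. K * (indicator S x * \<bar>inner w x\<bar> powr \<alpha>))"
      using integrable_restricted_moment[OF sets S fin] by simp
    show "AE x in \<mu>. (\<lambda>n. indicator S x * sym_second_diff \<alpha> (real n * inner v x) (inner w x)) \<longlonglongrightarrow>
       2 * (indicator ?S' x * \<bar>inner w x\<bar> powr \<alpha>)"
    proof (intro AE_I2)
      fix x
      show "(\<lambda>n. indicator S x * sym_second_diff \<alpha> (real n * inner v x) (inner w x)) \<longlonglongrightarrow>
          2 * (indicator ?S' x * \<bar>inner w x\<bar> powr \<alpha>)"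
      proof (cases "inner v x = 0")
        case False
        then show ?thesis
          using tendsto_mult_left[OF sym_second_diff_tendsto_0[OF \<alpha> False], of "indicator S x" "inner w x"]
          by (simp add: indicator_def)
      qed (simp add: sym_second_diff_def indicator_def)
    qed
    show "AE x in \<mu>. norm (indicator S x * sym_second_diff \<alpha> (real n * inner v x) (inner w x))
        \<le> K * (indicator S x * \<bar>inner w x\<bar> powr \<alpha>)" for n
      using abs_sym_second_diff_le[OF \<alpha>, of "real n * inner v x" "inner w x" for x]
      by (intro AE_I2) (auto simp: indicator_def K_def)
  qed
  then show ?thesis
    unfolding R_def restricted_moment_second_diff[OF sets S fin, symmetric]
      restricted_moment_eq_integral[OF sets S' fin']
    by simp
qed

lemma restricted_moment_hyperplane_eq:
  fixes \<mu> \<nu> :: "'b::euclidean_space measure"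
  assumes sets: "sets \<mu> = sets borel" "sets \<nu> = sets borel" and S: "S \<in> sets borel"
    and fin: "\<And>u. restricted_moment \<alpha> S \<mu> u < \<infinity>"
    and eq: "\<And>u. restricted_moment \<alpha> S \<nu> u = restricted_moment \<alpha> S \<mu> u"
    and \<alpha>: "0 < \<alpha>" "\<alpha> < 2"
  shows "restricted_moment \<alpha> (S \<inter> {x. inner v x = 0}) \<nu> w = restricted_moment \<alpha> (S \<inter> {x. inner v x = 0}) \<mu> w"
proof -
  let ?S' = "S \<inter> {x. inner v x = 0}"
  have fin': "restricted_moment \<alpha> S \<nu> u < \<infinity>" for u using fin eq by simp
  have fin'': "restricted_moment \<alpha> ?S' \<mu> w < \<infinity>" "restricted_moment \<alpha> ?S' \<nu> w < \<infinity>"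
    using restricted_moment_mono[of ?S' S] fin fin' by (blast intro: le_less_trans)+
  have "enn2real (restricted_moment \<alpha> ?S' \<nu> w) = enn2real (restricted_moment \<alpha> ?S' \<mu> w)"
    using LIMSEQ_unique[OF tendsto_restricted_moment_second_diff[OF sets(2) S fin' \<alpha>, unfolded eq]
        tendsto_restricted_moment_second_diff[OF sets(1) S fin \<alpha>]]
    by simp
  then show ?thesis using fin''(2,1) by (rule enn2real_eq_imp_eq)
qed

lemma restricted_moment_UNIV:
  "restricted_moment \<alpha> UNIV \<mu> u = (\<integral>\<^sup>+ x. ennreal (\<bar>inner u x\<bar> powr \<alpha>) \<partial>\<mu>)"
  unfolding restricted_moment_def by simp

lemma restricted_moment_nonzero:
  "0 < \<alpha> \<Longrightarrow> restricted_moment \<alpha> {x. x \<noteq> 0} \<mu> u = (\<integral>\<^sup>+ x. ennreal (\<bar>inner u x\<bar> powr \<alpha>) \<partial>\<mu>)"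
  unfolding restricted_moment_def by (intro nn_integral_cong) (auto simp: indicator_def)

lemma restricted_moment_coordinate_plane_eq:
  fixes \<mu> \<nu> :: "(real^'n) measure"
  assumes sets: "sets \<mu> = sets borel" "sets \<nu> = sets borel" and \<alpha>: "0 < \<alpha>" "\<alpha> < 2"
    and fin: "\<And>u. (\<integral>\<^sup>+ x. ennreal (\<bar>inner u x\<bar> powr \<alpha>) \<partial>\<mu>) < \<infinity>"
    and eq: "\<And>u. (\<integral>\<^sup>+ x. ennreal (\<bar>inner u x\<bar> powr \<alpha>) \<partial>\<nu>) = (\<integral>\<^sup>+ x. ennreal (\<bar>inner u x\<bar> powr \<alpha>) \<partial>\<mu>)"
  shows "restricted_moment \<alpha> {x. x $ i = 0 \<and> x $ j = 0} \<nu> w = restricted_moment \<alpha> {x. x $ i = 0 \<and> x $ j = 0} \<mu> w"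
proof -
  define S where "S = UNIV \<inter> {x::real^'n. inner (axis i 1) x = 0}"
  have S: "S \<in> sets borel" unfolding S_def by measurable
  have eqS: "restricted_moment \<alpha> S \<nu> u = restricted_moment \<alpha> S \<mu> u" for u
    unfolding S_def using sets \<alpha> fin eq
    by (intro restricted_moment_hyperplane_eq) (simp_all add: restricted_moment_UNIV)
  have "restricted_moment \<alpha> S \<mu> u < \<infinity>" for u
    using restricted_moment_mono[of S UNIV \<alpha> \<mu> u] fin[of u] by (simp add: restricted_moment_UNIV)
  then have "restricted_moment \<alpha> (S \<inter> {x. inner (axis j 1) x = 0}) \<nu> w =
      restricted_moment \<alpha> (S \<inter> {x. inner (axis j 1) x = 0}) \<mu> w"
    using eqS by (intro restricted_moment_hyperplane_eq[OF sets S _ _ \<alpha>])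
  moreover have "S \<inter> {x. inner (axis j 1) x = 0} = {x. x $ i = 0 \<and> x $ j = 0}"
    unfolding S_def by (auto simp: inner_axis')
  ultimately show ?thesis by simp
qed

lemma restricted_moment_null:
  assumes "sets \<mu> = sets borel" "S \<in> sets borel" "emeasure \<mu> S = 0"
  shows "restricted_moment \<alpha> S \<mu> w = 0"
proof -
  have [measurable]: "S \<in> sets borel" by (rule assms(2))
  have "AE x in \<mu>. x \<notin> S" using assms by (intro AE_not_in) (simp add: null_sets_def)
  then show ?thesis unfolding restricted_moment_def
    by (subst nn_integral_0_iff_AE) (auto simp: measurable_cong_sets[OF assms(1) refl] elim!: AE_mp)
qed

section \<open>Symmetric measures, sums of push-forwards and radial projections\<close>

definition symmetric_measure :: "'b::euclidean_space measure \<Rightarrow> bool" where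
  "symmetric_measure \<mu> \<longleftrightarrow> (\<forall>h::'b \<Rightarrow> ennreal. h \<in> borel_measurable borel \<longrightarrow> (\<integral>\<^sup>+ x. h (- x) \<partial>\<mu>) = (\<integral>\<^sup>+ x. h x \<partial>\<mu>))"

lemma uminus_image_eq_vimage: "uminus ` (A::'b::ab_group_add set) = uminus -` A"
  by (auto simp: image_iff) (metis minus_minus)

lemma symmetric_measureD:
  "symmetric_measure \<mu> \<Longrightarrow> h \<in> borel_measurable borel \<Longrightarrow> (\<integral>\<^sup>+ x. h (- x) \<partial>\<mu>) = (\<integral>\<^sup>+ x. h x \<partial>\<mu>)"
  unfolding symmetric_measure_def by blast

lemma symmetric_measureI:
  fixes \<mu> :: "'b::euclidean_space measure"
  assumes sets: "sets \<mu> = sets borel" and sym: "\<forall>A\<in>sets borel. emeasure \<mu> (uminus ` A) = emeasure \<mu> A"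
  shows "symmetric_measure \<mu>"
proof -
  have "distr \<mu> borel uminus = \<mu>"
  proof (rule measure_eqI)
    show "sets (distr \<mu> borel uminus) = sets \<mu>" using sets by simp
    fix A assume "A \<in> sets (distr \<mu> borel uminus)"
    then have A: "A \<in> sets borel" by simp
    have m: "uminus \<in> measurable \<mu> borel" using sets by (simp add: measurable_cong_sets[OF sets refl])
    have "emeasure (distr \<mu> borel uminus) A = emeasure \<mu> (uminus -` A \<inter> space \<mu>)"
      by (rule emeasure_distr[OF m A])
    also have "\<dots> = emeasure \<mu> (uminus ` A)"
      using sets_eq_imp_space_eq[OF sets] by (simp add: uminus_image_eq_vimage)
    also have "\<dots> = emeasure \<mu> A" using sym A by auto
    finally show "emeasure (distr \<mu> borel uminus) A = emeasure \<mu> A" .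
  qed
  show ?thesis unfolding symmetric_measure_def
  proof safe
    fix h :: "'b \<Rightarrow> ennreal" assume h[measurable]: "h \<in> borel_measurable borel"
    have m: "uminus \<in> measurable \<mu> borel" using sets by (simp add: measurable_cong_sets[OF sets refl])
    have "(\<integral>\<^sup>+ x. h x \<partial>distr \<mu> borel uminus) = (\<integral>\<^sup>+ x. h (- x) \<partial>\<mu>)"
      by (rule nn_integral_distr[OF m]) simp
    then show "(\<integral>\<^sup>+ x. h (- x) \<partial>\<mu>) = (\<integral>\<^sup>+ x. h x \<partial>\<mu>)"
      using \<open>distr \<mu> borel uminus = \<mu>\<close> by simp
  qed
qed

lemma emeasure_uminus_image_symmetric:
  fixes \<mu> :: "'b::euclidean_space measure"
  assumes sets: "sets \<mu> = sets borel" and "symmetric_measure \<mu>" and A: "A \<in> sets borel"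
  shows "emeasure \<mu> (uminus ` A) = emeasure \<mu> A"
proof -
  have A': "uminus ` A \<in> sets borel"
    unfolding uminus_image_eq_vimage by (rule measurable_sets_borel[OF _ A]) simp
  have "emeasure \<mu> (uminus ` A) = (\<integral>\<^sup>+ x. indicator (uminus ` A) x \<partial>\<mu>)"
    using A' sets by simp
  also have "\<dots> = (\<integral>\<^sup>+ x. indicator A (- x) \<partial>\<mu>)"
    by (intro nn_integral_cong) (simp add: uminus_image_eq_vimage indicator_def)
  also have "\<dots> = (\<integral>\<^sup>+ x. indicator A x \<partial>\<mu>)"
    using A by (intro symmetric_measureD[OF assms(2)]) simp
  also have "\<dots> = emeasure \<mu> A" using A sets by simp
  finally show ?thesis .
qed

text \<open>The measure \<open>\<Sum>\<^sub>m (A m)\<^sub>*G\<close>, encoded as one image of \<open>count_space UNIV \<Otimes>\<^sub>M G\<close>.\<close>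

definition sum_pushforward :: "'c::euclidean_space measure \<Rightarrow> ('i::countable \<Rightarrow> 'c \<Rightarrow> 'b::euclidean_space) \<Rightarrow> 'b measure" where
  "sum_pushforward G A = distr (count_space UNIV \<Otimes>\<^sub>M G) borel (\<lambda>(m, s). A m s)"

lemma sets_sum_pushforward: "sets (sum_pushforward G A) = sets borel" unfolding sum_pushforward_def by simp

lemma measurable_sum_pushforward:
  fixes A :: "'i::countable \<Rightarrow> 'c::euclidean_space \<Rightarrow> 'b::euclidean_space"
  assumes sets: "sets G = sets borel" and A: "\<And>m. A m \<in> borel_measurable borel"
  shows "(\<lambda>(m, s). A m s) \<in> measurable (count_space UNIV \<Otimes>\<^sub>M G) borel"
  by (rule measurable_pair_measure_countable1) (use A sets in \<open>auto simp: measurable_cong_sets[OF sets refl]\<close>)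

lemma nn_integral_sum_pushforward:
  fixes G :: "'c::euclidean_space measure"
  assumes sets: "sets G = sets borel" and sf: "sigma_finite_measure G"
    and A: "\<And>m. A m \<in> borel_measurable borel" and h: "h \<in> borel_measurable borel"
  shows "(\<integral>\<^sup>+ x. h x \<partial>sum_pushforward G A) = (\<integral>\<^sup>+ m. (\<integral>\<^sup>+ s. h (A m s) \<partial>G) \<partial>count_space UNIV)"
proof -
  have m: "(\<lambda>(m, s). A m s) \<in> measurable (count_space UNIV \<Otimes>\<^sub>M G) borel" by (rule measurable_sum_pushforward[OF sets A])
  have "(\<integral>\<^sup>+ x. h x \<partial>sum_pushforward G A) = (\<integral>\<^sup>+ x. h ((\<lambda>(m, s). A m s) x) \<partial>(count_space UNIV \<Otimes>\<^sub>M G))"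
    unfolding sum_pushforward_def by (rule nn_integral_distr[OF m]) (use h in simp)
  also have "\<dots> = (\<integral>\<^sup>+ m. (\<integral>\<^sup>+ s. h (A m s) \<partial>G) \<partial>count_space UNIV)"
    using sigma_finite_measure.nn_integral_fst[OF sf, of "\<lambda>(m, s). h (A m s)" "count_space UNIV"] m h
    by (simp add: split_beta')
  finally show ?thesis .
qed

lemma symmetric_sum_pushforward:
  fixes G :: "'c::euclidean_space measure"
  assumes sets: "sets G = sets borel" and sf: "sigma_finite_measure G" and sym: "symmetric_measure G"
    and A: "\<And>m. A m \<in> borel_measurable borel" and Aodd: "\<And>m s. A m (- s) = - A m s"
  shows "symmetric_measure (sum_pushforward G A)"
  unfolding symmetric_measure_def
proof (intro allI impI)
  fix h :: "'b \<Rightarrow> ennreal" assume h[measurable]: "h \<in> borel_measurable borel"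
  have "(\<integral>\<^sup>+ x. h (- x) \<partial>sum_pushforward G A) = (\<integral>\<^sup>+ m. (\<integral>\<^sup>+ s. h (- A m s) \<partial>G) \<partial>count_space UNIV)"
    by (rule nn_integral_sum_pushforward[OF sets sf A]) simp
  also have "\<dots> = (\<integral>\<^sup>+ m. (\<integral>\<^sup>+ s. h (A m s) \<partial>G) \<partial>count_space UNIV)"
    using symmetric_measureD[OF sym, of "\<lambda>s. h (A m s)" for m] A by (simp add: Aodd[symmetric])
  also have "\<dots> = (\<integral>\<^sup>+ x. h x \<partial>sum_pushforward G A)"
    by (rule nn_integral_sum_pushforward[OF sets sf A, symmetric]) simp
  finally show "(\<integral>\<^sup>+ x. h (- x) \<partial>sum_pushforward G A) = (\<integral>\<^sup>+ x. h x \<partial>sum_pushforward G A)" .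
qed

text \<open>Transports \<open>L\<close> onto \<open>{N = 1}\<close>; by \<open>\<alpha>\<close>-homogeneity of \<open>\<bar>\<langle>u, x\<rangle>\<bar>\<^sup>\<alpha>\<close> the \<open>\<alpha>\<close>-moments of \<open>L\<close>
  off \<open>{N = 0}\<close> are preserved.\<close>

definition radial_projection :: "real \<Rightarrow> ('b::euclidean_space \<Rightarrow> real) \<Rightarrow> 'b measure \<Rightarrow> 'b measure" where
  "radial_projection \<alpha> N L = distr (density L (\<lambda>x. ennreal (N x powr \<alpha>))) borel (\<lambda>x. x /\<^sub>R N x)"

locale abs_homogeneous =
  fixes N :: "'b::euclidean_space \<Rightarrow> real"
  assumes N_meas[measurable]: "N \<in> borel_measurable borel"
    and N_nonneg: "\<And>x. 0 \<le> N x"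
    and N_hom: "\<And>c x. N (c *\<^sub>R x) = \<bar>c\<bar> * N x"
begin

lemma N_uminus: "N (- x) = N x" using N_hom[of "-1" x] by simp

lemma N_divide_self: "N x \<noteq> 0 \<Longrightarrow> N (x /\<^sub>R N x) = 1"
  using N_hom[of "inverse (N x)" x] N_nonneg[of x] by simp

lemma sets_radial_projection: "sets (radial_projection \<alpha> N L) = sets borel" unfolding radial_projection_def by simp

lemma nn_integral_radial_projection:
  assumes sets: "sets L = sets borel" and h: "h \<in> borel_measurable borel"
  shows "(\<integral>\<^sup>+ y. h y \<partial>radial_projection \<alpha> N L) = (\<integral>\<^sup>+ x. ennreal (N x powr \<alpha>) * h (x /\<^sub>R N x) \<partial>L)"
proof -
  have m: "(\<lambda>x. x /\<^sub>R N x) \<in> measurable (density L (\<lambda>x. ennreal (N x powr \<alpha>))) borel"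
    by (simp add: measurable_cong_sets[OF sets refl])
  have "(\<integral>\<^sup>+ y. h y \<partial>radial_projection \<alpha> N L) = (\<integral>\<^sup>+ x. h (x /\<^sub>R N x) \<partial>density L (\<lambda>x. ennreal (N x powr \<alpha>)))"
    unfolding radial_projection_def by (rule nn_integral_distr[OF m]) (use h in simp)
  also have "\<dots> = (\<integral>\<^sup>+ x. ennreal (N x powr \<alpha>) * h (x /\<^sub>R N x) \<partial>L)"
    by (rule nn_integral_density) (use h in \<open>simp_all add: measurable_cong_sets[OF sets refl]\<close>)
  finally show ?thesis .
qed

lemma radial_projection_moment:
  assumes sets: "sets L = sets borel" and \<alpha>: "0 < \<alpha>"
  shows "(\<integral>\<^sup>+ y. ennreal (\<bar>inner u y\<bar> powr \<alpha>) \<partial>radial_projection \<alpha> N L) =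
         restricted_moment \<alpha> {x. N x \<noteq> 0} L u"
proof -
  have "(\<integral>\<^sup>+ y. ennreal (\<bar>inner u y\<bar> powr \<alpha>) \<partial>radial_projection \<alpha> N L) =
      (\<integral>\<^sup>+ x. ennreal (N x powr \<alpha>) * ennreal (\<bar>inner u (x /\<^sub>R N x)\<bar> powr \<alpha>) \<partial>L)"
    by (rule nn_integral_radial_projection[OF sets]) simp
  also have "\<dots> = restricted_moment \<alpha> {x. N x \<noteq> 0} L u"
    unfolding restricted_moment_def
  proof (intro nn_integral_cong)
    fix x
    show "ennreal (N x powr \<alpha>) * ennreal (\<bar>inner u (x /\<^sub>R N x)\<bar> powr \<alpha>) =
          ennreal (indicator {x. N x \<noteq> 0} x * \<bar>inner u x\<bar> powr \<alpha>)"
    proof (cases "N x = 0")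
      case True then show ?thesis by simp
    next
      case False
      then have Np: "0 < N x" using N_nonneg[of x] by simp
      have "N x powr \<alpha> * \<bar>inner u (x /\<^sub>R N x)\<bar> powr \<alpha> = N x powr \<alpha> * (\<bar>inner u x\<bar> / N x) powr \<alpha>"
        using Np by (simp add: inner_scaleR_right abs_mult divide_inverse_commute)
      also have "\<dots> = \<bar>inner u x\<bar> powr \<alpha>"
        using Np by (simp add: powr_divide)
      finally show ?thesis using False by (simp add: ennreal_mult''[symmetric])
    qed
  qed
  finally show ?thesis .
qed

lemma radial_projection_null_outside:
  assumes sets: "sets L = sets borel"
  shows "emeasure (radial_projection \<alpha> N L) (- {x. N x = 1}) = 0"
proof -
  have C: "- {x. N x = 1} \<in> sets borel" by measurable
  have "emeasure (radial_projection \<alpha> N L) (- {x. N x = 1}) = (\<integral>\<^sup>+ y. indicator (- {x. N x = 1}) y \<partial>radial_projection \<alpha> N L)"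
    using C by (simp add: sets_radial_projection)
  also have "\<dots> = (\<integral>\<^sup>+ x. ennreal (N x powr \<alpha>) * indicator (- {x. N x = 1}) (x /\<^sub>R N x) \<partial>L)"
    by (rule nn_integral_radial_projection[OF sets]) (use C in simp)
  also have "\<dots> = (\<integral>\<^sup>+ x. 0 \<partial>L)"
  proof (intro nn_integral_cong)
    fix x show "ennreal (N x powr \<alpha>) * indicator (- {x. N x = 1}) (x /\<^sub>R N x) = 0"
      by (cases "N x = 0") (auto simp: N_divide_self indicator_def)
  qed
  finally show ?thesis by simp
qed

lemma symmetric_radial_projection:
  assumes sets: "sets L = sets borel" and sym: "symmetric_measure L"
  shows "symmetric_measure (radial_projection \<alpha> N L)"
  unfolding symmetric_measure_def
proof (intro allI impI)
  fix h :: "'b \<Rightarrow> ennreal" assume h[measurable]: "h \<in> borel_measurable borel"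
  have "(\<integral>\<^sup>+ x. h (- x) \<partial>radial_projection \<alpha> N L) = (\<integral>\<^sup>+ x. ennreal (N x powr \<alpha>) * h (- (x /\<^sub>R N x)) \<partial>L)"
    by (rule nn_integral_radial_projection[OF sets]) simp
  also have "\<dots> = (\<integral>\<^sup>+ x. ennreal (N x powr \<alpha>) * h (x /\<^sub>R N x) \<partial>L)"
    using symmetric_measureD[OF sym, of "\<lambda>x. ennreal (N x powr \<alpha>) * h (x /\<^sub>R N x)"]
    by (simp add: N_uminus)
  also have "\<dots> = (\<integral>\<^sup>+ x. h x \<partial>radial_projection \<alpha> N L)"
    by (rule nn_integral_radial_projection[OF sets, symmetric]) simp
  finally show "(\<integral>\<^sup>+ x. h (- x) \<partial>radial_projection \<alpha> N L) = (\<integral>\<^sup>+ x. h x \<partial>radial_projection \<alpha> N L)" .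
qed

lemma emeasure_radial_projection_UNIV:
  assumes sets: "sets L = sets borel"
  shows "emeasure (radial_projection \<alpha> N L) UNIV = (\<integral>\<^sup>+ x. ennreal (N x powr \<alpha>) \<partial>L)"
proof -
  have "emeasure (radial_projection \<alpha> N L) UNIV = (\<integral>\<^sup>+ y. 1 \<partial>radial_projection \<alpha> N L)"
    using sets_radial_projection[of \<alpha> L] by (simp add: sets_eq_imp_space_eq)
  also have "\<dots> = (\<integral>\<^sup>+ x. ennreal (N x powr \<alpha>) * 1 \<partial>L)"
    by (rule nn_integral_radial_projection[OF sets]) simp
  finally show ?thesis by simp
qed

end

lemma represents_on_moment_eq:
  assumes "represents_on C \<alpha> \<Gamma> M X" "char_fun_vec M X u = complex_of_real (exp (- enn2real T))" "T < \<infinity>"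
  shows "(\<integral>\<^sup>+ s. ennreal (\<bar>inner u s\<bar> powr \<alpha>) \<partial>\<Gamma>) = T"
  using assms unfolding represents_on_def by (auto intro: enn2real_eq_imp_eq)

lemma (in abs_homogeneous) represents_on_radial_projection:
  assumes "X \<in> borel_measurable M" "sets L = sets borel" "symmetric_measure L" "0 < \<alpha>"
    and "\<And>u. restricted_moment \<alpha> {x. N x \<noteq> 0} L u < \<infinity>"
    and "\<And>u. char_fun_vec M X u = complex_of_real (exp (- enn2real (restricted_moment \<alpha> {x. N x \<noteq> 0} L u)))"
  shows "represents_on {x. N x = 1} \<alpha> (radial_projection \<alpha> N L) M X"
  unfolding represents_on_def sym_borel_measure_on_def
  using assms sets_radial_projection radial_projection_null_outside radial_projection_moment
    emeasure_uminus_image_symmetric[OF sets_radial_projection symmetric_radial_projection]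
  by auto

interpretation norm: abs_homogeneous "norm :: 'a::euclidean_space \<Rightarrow> real"
  by unfold_locales auto

interpretation seminorm12: abs_homogeneous seminorm12
proof
  show "seminorm12 \<in> borel_measurable borel" unfolding seminorm12_def by measurable
  show "0 \<le> seminorm12 x" for x unfolding seminorm12_def by simp
  show "seminorm12 (c *\<^sub>R x) = \<bar>c\<bar> * seminorm12 x" for c x
  proof -
    have "(c * x $ 1)\<^sup>2 + (c * x $ 2)\<^sup>2 = c\<^sup>2 * ((x $ 1)\<^sup>2 + (x $ 2)\<^sup>2)"
      by (simp add: algebra_simps power_mult_distrib)
    then show ?thesis unfolding seminorm12_def by (simp add: real_sqrt_mult)
  qed
qed

section \<open>Tails of symmetric stable laws\<close>

definition one_minus_cos_integral :: "real \<Rightarrow> real \<Rightarrow> real" where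
  "one_minus_cos_integral u x = (if x = 0 then 0 else 2 * (u - sin (u * x) / x))"

lemma integral_one_minus_cos:
  fixes u x :: real assumes "0 \<le> u"
  shows "(LBINT t:{-u..u}. 1 - cos (t * x)) = one_minus_cos_integral u x"
proof (cases "x = 0")
  case False
  have "(LBINT t:{-u..u}. 1 - cos (t * x)) = (LBINT t=-u..u. 1 - cos (t * x))"
    using assms by (simp add: interval_integral_Icc)
  also have "\<dots> = (u - sin (u * x) / x) - (- u - sin (- u * x) / x)"
    using assms False
    by (intro interval_integral_FTC_finite continuous_intros)
       (auto intro!: derivative_eq_intros simp: has_real_derivative_iff_has_vector_derivative[symmetric])
  finally show ?thesis using False by (simp add: one_minus_cos_integral_def)
qed (simp add: one_minus_cos_integral_def)

lemma one_minus_cos_integral_bounds: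
  fixes u x :: real assumes u: "0 < u"
  shows "u * indicator {x. 2 / u \<le> \<bar>x\<bar>} x \<le> one_minus_cos_integral u x"
    and "\<bar>one_minus_cos_integral u x\<bar> \<le> 4 * u"
proof -
  define q where "q = sin (u * x) / x"
  have "\<bar>q\<bar> \<le> u"
    using abs_sin_x_le_abs_x[of "u * x"] u by (cases "x = 0") (simp_all add: q_def abs_mult divide_le_eq)
  moreover have "\<bar>q\<bar> \<le> u / 2" if "2 / u \<le> \<bar>x\<bar>"
  proof -
    have "2 \<le> u * \<bar>x\<bar>" using that u by (simp add: field_simps)
    then have "2 * \<bar>sin (u * x)\<bar> \<le> u * \<bar>x\<bar>" using abs_sin_le_one[of "u * x"] by linarith
    moreover have "x \<noteq> 0" using \<open>2 \<le> u * \<bar>x\<bar>\<close> by auto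
    ultimately show ?thesis by (simp add: q_def abs_mult field_simps)
  qed
  ultimately show "u * indicator {x. 2 / u \<le> \<bar>x\<bar>} x \<le> one_minus_cos_integral u x"
    and "\<bar>one_minus_cos_integral u x\<bar> \<le> 4 * u"
    using u by (auto simp: one_minus_cos_integral_def q_def[symmetric] split: split_indicator)
qed

lemma (in real_distribution) one_minus_Re_char:
  "1 - Re (char M t) = expectation (\<lambda>x. 1 - cos (t * x))"
proof -
  have "Re (char M t) = expectation (\<lambda>x. Re (iexp (t * x)))"
    unfolding char_def by (rule integral_Re[symmetric]) (auto intro!: integrable_const_bound[where B = 1])
  also have "\<dots> = expectation (\<lambda>x. cos (t * x))"
    by (simp add: cos_of_real[symmetric] Re_exp)
  finally show ?thesis
    by (subst Bochner_Integration.integral_diff)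
       (auto simp: prob_space[unfolded space_eq_univ] intro!: integrable_const_bound[where B = 1])
qed

lemma (in real_distribution) integral_one_minus_Re_char:
  assumes u: "0 < u"
  shows "(LBINT t:{-u..u}. 1 - Re (char M t)) = expectation (one_minus_cos_integral u)"
proof -
  interpret P: pair_sigma_finite M lborel ..
  define f where "f = (\<lambda>(x, t). indicator {-u..u} t * (1 - cos (t * x)) :: real)"
  have "integrable (M \<Otimes>\<^sub>M lborel) (\<lambda>p. indicator (UNIV \<times> {-u..u}) p *\<^sub>R (1 - cos (snd p * fst p)))"
    by (intro integrableI_bounded_set_indicator[where B = 2])
       (auto simp: lborel.emeasure_pair_measure_Times ennreal_mult_less_top emeasure_lborel_Icc_eq
         emeasure_space_1[unfolded space_eq_univ])
  then have "integrable (M \<Otimes>\<^sub>M lborel) f"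
    by (rule Bochner_Integration.integrable_cong[THEN iffD1, rotated 2]) (auto simp: f_def indicator_def)
  moreover have "(LBINT t:{-u..u}. 1 - Re (char M t)) = (\<integral>t. \<integral>x. f (x, t) \<partial>M \<partial>lborel)"
    unfolding set_lebesgue_integral_def f_def
    by (intro Bochner_Integration.integral_cong) (auto simp: one_minus_Re_char split: split_indicator)
  ultimately show ?thesis
    using P.Fubini_integral[of "\<lambda>x t. f (x, t)"] integral_one_minus_cos u
    by (simp add: f_def set_lebesgue_integral_def)
qed

lemma (in real_distribution) prob_abs_ge_le_char:
  assumes u: "0 < u"
  shows "u * prob {x. 2 / u \<le> \<bar>x\<bar>} \<le> (LBINT t:{-u..u}. 1 - Re (char M t))"
proof -
  have "integrable M (one_minus_cos_integral u)"
  proof (rule integrable_const_bound[where B = "4 * u"])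
    show "AE x in M. norm (one_minus_cos_integral u x) \<le> 4 * u"
      using one_minus_cos_integral_bounds(2)[OF u] by simp
    show "one_minus_cos_integral u \<in> borel_measurable M"
      unfolding one_minus_cos_integral_def[abs_def] by measurable
  qed
  then have "(\<integral>x. u * indicator {x. 2 / u \<le> \<bar>x\<bar>} x \<partial>M) \<le> expectation (one_minus_cos_integral u)"
    by (intro integral_mono one_minus_cos_integral_bounds(1)[OF u] integrable_mult_right integrable_real_indicator)
       (simp_all add: less_top[symmetric])
  then show ?thesis
    unfolding integral_one_minus_Re_char[OF u] by (subst (asm) integral_mult_right_zero) simp
qed

lemma (in real_distribution) prob_abs_ge_le_stable:
  assumes u: "u > 0" and C: "0 \<le> C" and a: "0 < \<alpha>"
    and ch: "\<And>\<theta>. char M \<theta> = complex_of_real (exp (- (\<bar>\<theta>\<bar> powr \<alpha> * C)))"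
  shows "prob {x. 2 / u \<le> \<bar>x\<bar>} \<le> 2 * C * u powr \<alpha>"
proof -
  define f where "f t = 1 - exp (- (\<bar>t\<bar> powr \<alpha> * C))" for t
  have fm[measurable]: "f \<in> borel_measurable borel" unfolding f_def by measurable
  have fb: "f t \<le> C * u powr \<alpha>" if "t \<in> {-u..u}" for t
  proof -
    have "1 - exp (- (\<bar>t\<bar> powr \<alpha> * C)) \<le> \<bar>t\<bar> powr \<alpha> * C"
      using exp_ge_add_one_self[of "- (\<bar>t\<bar> powr \<alpha> * C)"] by simp
    also have "\<dots> \<le> u powr \<alpha> * C" using that a C by (intro mult_right_mono powr_mono2) auto
    finally show ?thesis unfolding f_def by (simp add: mult.commute)
  qed
  have fi: "set_integrable lborel {-u..u} f"
    unfolding set_integrable_def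
    by (intro integrableI_bounded_set_indicator[where B = "C * u powr \<alpha>"])
       (use fb C in \<open>auto simp: f_def emeasure_lborel_Icc_eq intro!: AE_I2\<close>)
  have ci: "set_integrable lborel {-u..u} (\<lambda>_. C * u powr \<alpha>)"
    unfolding set_integrable_def
    by (intro integrableI_bounded_set_indicator[where B = "C * u powr \<alpha>"]) (use C in \<open>auto simp: emeasure_lborel_Icc_eq\<close>)
  have "u * prob {x. 2 / u \<le> \<bar>x\<bar>} \<le> (LBINT t:{-u..u}. 1 - Re (char M t))"
    by (rule prob_abs_ge_le_char[OF u])
  also have "\<dots> = (LBINT t:{-u..u}. f t)"
    unfolding ch f_def by simp
  also have "\<dots> \<le> (LBINT t:{-u..u}. C * u powr \<alpha>)"
    by (rule set_integral_mono[OF fi ci fb])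
  also have "\<dots> = 2 * u * (C * u powr \<alpha>)"
    using u by (subst set_integral_const) auto
  finally have "u * prob {x. 2 / u \<le> \<bar>x\<bar>} \<le> u * (2 * C * u powr \<alpha>)" by (simp add: algebra_simps)
  then show ?thesis using u by simp
qed

text \<open>Borel--Cantelli with the thresholds \<open>b ^ k\<close>, where \<open>1 < b\<close> and \<open>\<bar>r\<bar> * b < 1\<close>.\<close>
lemma (in prob_space) AE_summable_geometric_weights:
  fixes Y :: "nat \<Rightarrow> 'a \<Rightarrow> real"
  assumes r: "\<bar>r\<bar> < 1" and \<alpha>: "0 < \<alpha>" and [measurable]: "\<And>k. Y k \<in> borel_measurable M"
    and tail: "\<And>k c. 0 < c \<Longrightarrow> prob {\<omega> \<in> space M. c \<le> \<bar>Y k \<omega>\<bar>} \<le> K * c powr - \<alpha>"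
  shows "AE \<omega> in M. summable (\<lambda>k. r ^ k * Y k \<omega>)"
proof -
  define b where "b = 2 / (1 + \<bar>r\<bar>)"
  have b: "1 < b" "\<bar>r\<bar> * b < 1" using r unfolding b_def by (auto simp: field_simps)
  define A where "A k = {\<omega> \<in> space M. b ^ k \<le> \<bar>Y k \<omega>\<bar>}" for k
  have [measurable]: "A k \<in> events" for k unfolding A_def by measurable
  have "prob (A k) \<le> K * inverse (b powr \<alpha>) ^ k" for k
  proof -
    have "prob (A k) \<le> K * (b ^ k) powr - \<alpha>" unfolding A_def using b by (intro tail) simp
    also have "(b ^ k) powr - \<alpha> = inverse (b powr \<alpha>) ^ k"
      using b by (simp add: powr_realpow[symmetric] powr_powr powr_minus power_inverse mult.commute
          flip: powr_power)
    finally show ?thesis .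
  qed
  moreover have "inverse (b powr \<alpha>) < 1" using gr_one_powr[OF b(1) \<alpha>] by (simp add: inverse_less_1_iff)
  ultimately have "summable (\<lambda>k. prob (A k))"
    by (intro summable_comparison_test[OF _ summable_mult[OF summable_geometric]]) auto
  then have "AE \<omega> in M. eventually (\<lambda>k. \<omega> \<in> space M - A k) sequentially"
    by (intro borel_cantelli_AE1) (auto simp: emeasure_eq_measure)
  then show ?thesis
  proof (rule AE_mp[OF _ AE_I2], intro impI)
    fix \<omega> assume ev: "eventually (\<lambda>k. \<omega> \<in> space M - A k) sequentially" and \<omega>: "\<omega> \<in> space M"
    have "eventually (\<lambda>k. norm (r ^ k * Y k \<omega>) \<le> (\<bar>r\<bar> * b) ^ k) sequentially"
    proof (rule eventually_mono[OF ev])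
      fix k assume "\<omega> \<in> space M - A k"
      then have "\<bar>Y k \<omega>\<bar> \<le> b ^ k" unfolding A_def using \<omega> by auto
      then show "norm (r ^ k * Y k \<omega>) \<le> (\<bar>r\<bar> * b) ^ k"
        by (simp add: abs_mult power_abs power_mult_distrib mult_left_mono)
    qed
    then show "summable (\<lambda>k. r ^ k * Y k \<omega>)"
      by (rule summable_comparison_test_ev) (use b in \<open>auto intro!: summable_geometric\<close>)
  qed
qed

lemma filterlim_nat_add_int_at_top:
  "filterlim (\<lambda>n::nat. nat (c + int n) + 1) at_top sequentially"
  unfolding filterlim_at_top eventually_sequentially
proof (intro allI)
  show "\<exists>N. \<forall>n\<ge>N. Z \<le> nat (c + int n) + 1" for Z
    by (rule exI[of _ "Z + nat \<bar>c\<bar>"]) auto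
qed

lemma tendsto_window_sum_forward:
  fixes f :: "int \<Rightarrow> real"
  assumes "summable (\<lambda>k. r ^ k * f (s + int k))"
  shows "(\<lambda>n::nat. \<Sum>m\<in>{a - int n..a + int n}. (if s \<le> m then r ^ nat (m - s) else 0) * f m)
           \<longlonglongrightarrow> (\<Sum>k. r ^ k * f (s + int k))"
proof -
  define g where "g m = (if s \<le> m then r ^ nat (m - s) else 0) * f m" for m
  have "(\<lambda>n::nat. \<Sum>k<nat (a - s + int n) + 1. r ^ k * f (s + int k)) \<longlonglongrightarrow> (\<Sum>k. r ^ k * f (s + int k))"
    by (rule filterlim_compose[OF summable_LIMSEQ[OF assms] filterlim_nat_add_int_at_top])
  moreover have "(\<Sum>k<nat (a - s + int n) + 1. r ^ k * f (s + int k)) = (\<Sum>m\<in>{a - int n..a + int n}. g m)"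
    if n: "nat \<bar>a - s\<bar> \<le> n" for n
  proof -
    have "(\<Sum>m\<in>{a - int n..a + int n}. g m) = (\<Sum>m\<in>{s..a + int n}. g m)"
      by (rule sum.mono_neutral_right) (use n in \<open>auto simp: g_def\<close>)
    also have "\<dots> = (\<Sum>k<nat (a - s + int n) + 1. r ^ k * f (s + int k))"
      by (rule sum.reindex_bij_witness[where i = "\<lambda>k. s + int k" and j = "\<lambda>m. nat (m - s)"])
         (use n in \<open>auto simp: g_def\<close>)
    finally show ?thesis by simp
  qed
  ultimately show ?thesis
    unfolding g_def[symmetric] by (rule Lim_transform_eventually[OF _ eventually_sequentiallyI])
qed

lemma tendsto_window_sum_backward:
  fixes f :: "int \<Rightarrow> real"
  assumes "summable (\<lambda>k. r ^ k * f (s - int k))"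
  shows "(\<lambda>n::nat. \<Sum>m\<in>{a - int n..a + int n}. (if m \<le> s then r ^ nat (s - m) else 0) * f m)
           \<longlonglongrightarrow> (\<Sum>k. r ^ k * f (s - int k))"
proof -
  have "(\<Sum>m\<in>{a - int n..a + int n}. (if m \<le> s then r ^ nat (s - m) else 0) * f m) =
      (\<Sum>m\<in>{- a - int n..- a + int n}. (if - s \<le> m then r ^ nat (m - - s) else 0) * f (- m))" for n
    by (rule sum.reindex_bij_witness[where i = uminus and j = uminus]) auto
  then show ?thesis
    using tendsto_window_sum_forward[of r "\<lambda>m. f (- m)" "- s" "- a"] assms by simp
qed

lemma sum_power_abs_diff_interval:
  fixes q :: real assumes q: "0 \<le> q" "q < 1"
  shows "(\<Sum>m\<in>{s - int N..s + int N}. q ^ nat \<bar>m - s\<bar>) = 2 * (\<Sum>k<Suc N. q ^ k) - 1"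
proof (induction N)
  case 0
  then show ?case by simp
next
  case (Suc N)
  have e: "{s - int (Suc N)..s + int (Suc N)} = insert (s - int N - 1) (insert (s + int N + 1) {s - int N..s + int N})"
    by auto
  have n1: "nat \<bar>s - int N - 1 - s\<bar> = Suc N" "nat \<bar>s + int N + 1 - s\<bar> = Suc N"
    "nat (1 + int N) = Suc N" "nat (int N + 1) = Suc N" by auto
  show ?case unfolding e using Suc by (simp add: n1)
qed

lemma sum_power_abs_diff_le:
  fixes q :: real assumes q: "0 \<le> q" "q < 1" and A: "finite A"
  shows "(\<Sum>m\<in>A. q ^ nat \<bar>m - s\<bar>) \<le> 2 / (1 - q)"
proof -
  obtain N :: nat where N: "\<forall>m\<in>A. \<bar>m - s\<bar> \<le> int N"
  proof -
    have "finite ((\<lambda>m. nat \<bar>m - s\<bar>) ` A)" using A by simp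
    then obtain N where "\<forall>x\<in>(\<lambda>m. nat \<bar>m - s\<bar>) ` A. x \<le> N"
      using finite_nat_set_iff_bounded_le by blast
    then show ?thesis using that[of N] by force
  qed
  have "(\<Sum>m\<in>A. q ^ nat \<bar>m - s\<bar>) \<le> (\<Sum>m\<in>{s - int N..s + int N}. q ^ nat \<bar>m - s\<bar>)"
  proof (rule sum_mono2)
    show "A \<subseteq> {s - int N..s + int N}" using N by (force simp: abs_le_iff)
  qed (use q in auto)
  also have "\<dots> = 2 * (\<Sum>k<Suc N. q ^ k) - 1" by (rule sum_power_abs_diff_interval[OF q])
  also have "(\<Sum>k<Suc N. q ^ k) \<le> 1 / (1 - q)"
    using sum_le_suminf[OF summable_geometric[of q], of "{..<Suc N}"] suminf_geometric[of q] q by auto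
  then have "2 * (\<Sum>k<Suc N. q ^ k) - 1 \<le> 2 / (1 - q)" by simp
  finally show ?thesis .
qed

lemma tendsto_window_sum_nn_integral_count_space:
  fixes f :: "int \<Rightarrow> ennreal"
  shows "(\<lambda>n. \<Sum>m\<in>{a - int n..a + int n}. f m) \<longlonglongrightarrow> (\<integral>\<^sup>+ m. f m \<partial>count_space UNIV)"
proof -
  define g where "g n m = f m * indicator {a - int n..a + int n} m" for n m
  have inc: "incseq g"
    unfolding g_def incseq_def le_fun_def by (auto intro!: mult_left_mono split: split_indicator)
  have "(SUP n. g n m) = f m" for m
  proof (rule antisym)
    show "(SUP n. g n m) \<le> f m"
      by (rule SUP_least) (auto simp: g_def split: split_indicator)
    have "m \<in> {a - int (nat \<bar>m - a\<bar>)..a + int (nat \<bar>m - a\<bar>)}" by auto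
    then have "g (nat \<bar>m - a\<bar>) m = f m" unfolding g_def by simp
    then show "f m \<le> (SUP n. g n m)" by (metis SUP_upper UNIV_I)
  qed
  moreover have sums: "(\<integral>\<^sup>+ m. g n m \<partial>count_space UNIV) = (\<Sum>m\<in>{a - int n..a + int n}. f m)" for n
  proof -
    have "(\<integral>\<^sup>+ m. g n m \<partial>count_space UNIV) = (\<integral>\<^sup>+ m. f m \<partial>count_space {a - int n..a + int n})"
      unfolding g_def by (simp add: nn_integral_count_space_indicator)
    then show ?thesis by (simp add: nn_integral_count_space_finite)
  qed
  ultimately have "(\<integral>\<^sup>+ m. f m \<partial>count_space UNIV) = (SUP n. \<Sum>m\<in>{a - int n..a + int n}. f m)"
    using nn_integral_monotone_convergence_SUP[OF inc] by simp
  moreover have "incseq (\<lambda>n. \<Sum>m\<in>{a - int n..a + int n}. f m)"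
    using inc unfolding sums[symmetric] incseq_def le_fun_def by (auto intro!: nn_integral_mono)
  ultimately show ?thesis by (simp add: LIMSEQ_SUP)
qed

lemma le_nn_integral_count_space: "f a \<le> (\<integral>\<^sup>+ m. f m \<partial>count_space UNIV)"
proof -
  have "f a = (\<integral>\<^sup>+ m. f m * indicator {a} m \<partial>count_space UNIV)" by simp
  also have "\<dots> \<le> (\<integral>\<^sup>+ m. f m \<partial>count_space UNIV)"
    by (intro nn_integral_mono) (auto split: split_indicator)
  finally show ?thesis .
qed

lemma vector4_nth [simp]:
  "(vector [a,b,c,d] :: ('x::zero)^4) $ 1 = a"
  "(vector [a,b,c,d] :: ('x::zero)^4) $ 2 = b"
  "(vector [a,b,c,d] :: ('x::zero)^4) $ 3 = c"
  "(vector [a,b,c,d] :: ('x::zero)^4) $ 4 = d"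
  unfolding vector_def by simp_all

lemma inner_vec4: "inner (u::real^4) v = u$1 * v$1 + u$2 * v$2 + u$3 * v$3 + u$4 * v$4"
  by (simp add: inner_vec_def sum_4)

lemma inner_vec2: "inner (u::real^2) v = u$1 * v$1 + u$2 * v$2"
  by (simp add: inner_vec_def sum_2)

lemma vector4_eq: "(vector [a,b,c,d] :: real^4) = a *\<^sub>R axis 1 1 + b *\<^sub>R axis 2 1 + c *\<^sub>R axis 3 1 + d *\<^sub>R axis 4 1"
  by (simp add: vec_eq_iff forall_4 axis_def)

lemma measurable_vector4[measurable]:
  assumes [measurable]: "f \<in> borel_measurable M" "g \<in> borel_measurable M" "h \<in> borel_measurable M" "k \<in> borel_measurable M"
  shows "(\<lambda>\<omega>. vector [f \<omega>, g \<omega>, h \<omega>, k \<omega>] :: real^4) \<in> borel_measurable M"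
  unfolding vector4_eq by measurable

lemma measurable_vec_nth[measurable]: "(\<lambda>x::real^'n. x $ i) \<in> borel_measurable borel"
  by (simp add: cart_eq_inner_axis)

lemma measurable_cis[measurable]:
  assumes [measurable]: "f \<in> borel_measurable M"
  shows "(\<lambda>x. cis (f x)) \<in> borel_measurable M"
  unfolding cis_conv_exp by measurable

lemma norm_powr_le_sum_abs_powr:
  fixes x :: "real^4" assumes "0 < \<alpha>"
  shows "norm x powr \<alpha> \<le> 4 powr \<alpha> * (\<bar>x$1\<bar> powr \<alpha> + \<bar>x$2\<bar> powr \<alpha> + \<bar>x$3\<bar> powr \<alpha> + \<bar>x$4\<bar> powr \<alpha>)"
proof -
  define m where "m = max (max \<bar>x$1\<bar> \<bar>x$2\<bar>) (max \<bar>x$3\<bar> \<bar>x$4\<bar>)"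
  have "norm x \<le> \<bar>x$1\<bar> + \<bar>x$2\<bar> + \<bar>x$3\<bar> + \<bar>x$4\<bar>" using norm_le_l1_cart[of x] by (simp add: sum_4)
  also have "\<dots> \<le> 4 * m" unfolding m_def by linarith
  finally have "norm x powr \<alpha> \<le> 4 powr \<alpha> * m powr \<alpha>"
    using assms by (simp add: powr_mono2 flip: powr_mult)
  also have "m powr \<alpha> \<le> \<bar>x$1\<bar> powr \<alpha> + \<bar>x$2\<bar> powr \<alpha> + \<bar>x$3\<bar> powr \<alpha> + \<bar>x$4\<bar> powr \<alpha>"
    unfolding m_def max_def
    using powr_ge_zero[of "\<bar>x$1\<bar>" \<alpha>] powr_ge_zero[of "\<bar>x$2\<bar>" \<alpha>] powr_ge_zero[of "\<bar>x$3\<bar>" \<alpha>]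
      powr_ge_zero[of "\<bar>x$4\<bar>" \<alpha>]
    by (auto split: if_splits)
  finally show ?thesis by (simp add: mult_left_mono)
qed

section \<open>The pair of autoregressive processes\<close>

locale SaS_AR_pair =
  fixes M :: "'a measure" and \<alpha> \<rho>1 \<rho>2 :: real
    and \<epsilon> :: "int \<Rightarrow> 'a \<Rightarrow> real^2" and \<Gamma>2 :: "(real^2) measure" and t :: int
  assumes prob_space_M: "prob_space M"
    and \<alpha>: "0 < \<alpha>" "\<alpha> < 2"
    and \<rho>: "0 < \<bar>\<rho>1\<bar>" "\<bar>\<rho>1\<bar> < 1" "0 < \<bar>\<rho>2\<bar>" "\<bar>\<rho>2\<bar> < 1"
    and measurable_noise[measurable]: "\<And>t. \<epsilon> t \<in> borel_measurable M"
    and indep_noise: "prob_space.indep_vars M (\<lambda>_. borel) \<epsilon> UNIV"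
    and distr_noise: "\<And>t. distr M borel (\<epsilon> t) = distr M borel (\<epsilon> 0)"
    and spectral_noise: "SaS_spectral \<alpha> \<Gamma>2 M (\<epsilon> 0)"
begin

sublocale prob_space M by (rule prob_space_M)

definition noise_exponent :: "real^2 \<Rightarrow> real" where
  "noise_exponent v = enn2real (\<integral>\<^sup>+ s. ennreal (\<bar>inner v s\<bar> powr \<alpha>) \<partial>\<Gamma>2)"

lemma sets_Gamma2: "sets \<Gamma>2 = sets borel"
  and finite_Gamma2: "finite_measure \<Gamma>2"
  and Gamma2_null_outside: "emeasure \<Gamma>2 (- sphere 0 1) = 0"
  and Gamma2_symmetric: "\<forall>A\<in>sets borel. emeasure \<Gamma>2 (uminus ` A) = emeasure \<Gamma>2 A"
  and noise_moment_finite: "(\<integral>\<^sup>+ s. ennreal (\<bar>inner v s\<bar> powr \<alpha>) \<partial>\<Gamma>2) < \<infinity>"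
  and char_fun_noise_0: "char_fun_vec M (\<epsilon> 0) v = complex_of_real (exp (- noise_exponent v))"
  using spectral_noise unfolding SaS_spectral_def represents_on_def sym_borel_measure_on_def noise_exponent_def
  by auto

lemma noise_exponent_nonneg: "0 \<le> noise_exponent v"
  by (simp add: noise_exponent_def)

lemma nn_integral_noise_exponent:
  "(\<integral>\<^sup>+ s. ennreal (\<bar>inner v s\<bar> powr \<alpha>) \<partial>\<Gamma>2) = ennreal (noise_exponent v)"
  using noise_moment_finite[of v] by (simp add: noise_exponent_def less_top)

lemma noise_exponent_scaleR: "noise_exponent (c *\<^sub>R v) = \<bar>c\<bar> powr \<alpha> * noise_exponent v"
proof -
  have "(\<integral>\<^sup>+ s. ennreal (\<bar>inner (c *\<^sub>R v) s\<bar> powr \<alpha>) \<partial>\<Gamma>2) =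
      (\<integral>\<^sup>+ s. ennreal (\<bar>c\<bar> powr \<alpha>) * ennreal (\<bar>inner v s\<bar> powr \<alpha>) \<partial>\<Gamma>2)"
    by (intro nn_integral_cong) (simp add: abs_mult powr_mult ennreal_mult)
  also have "\<dots> = ennreal (\<bar>c\<bar> powr \<alpha>) * (\<integral>\<^sup>+ s. ennreal (\<bar>inner v s\<bar> powr \<alpha>) \<partial>\<Gamma>2)"
    by (rule nn_integral_cmult) (simp add: measurable_cong_sets[OF sets_Gamma2 refl])
  finally show ?thesis unfolding noise_exponent_def by (simp add: enn2real_mult)
qed

lemma AE_Gamma2_sphere: "AE s in \<Gamma>2. s \<in> sphere 0 1"
proof -
  have "- sphere 0 1 \<in> null_sets \<Gamma>2" using Gamma2_null_outside sets_Gamma2 by (simp add: null_sets_def)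
  then show ?thesis using AE_not_in by fastforce
qed

lemma noise_exponent_le_norm: "noise_exponent v \<le> norm v powr \<alpha> * measure \<Gamma>2 (space \<Gamma>2)"
proof -
  have "(\<integral>\<^sup>+ s. ennreal (\<bar>inner v s\<bar> powr \<alpha>) \<partial>\<Gamma>2) \<le> (\<integral>\<^sup>+ s. ennreal (norm v powr \<alpha>) \<partial>\<Gamma>2)"
    using AE_Gamma2_sphere
  proof (intro nn_integral_mono_AE, eventually_elim)
    case (elim s)
    then have "\<bar>inner v s\<bar> \<le> norm v" using Cauchy_Schwarz_ineq2[of v s] by simp
    then show ?case by (intro ennreal_leI powr_mono2) (use \<alpha> in auto)
  qed
  also have "\<dots> = ennreal (norm v powr \<alpha> * measure \<Gamma>2 (space \<Gamma>2))"
    using finite_Gamma2 by (simp add: finite_measure.emeasure_eq_measure ennreal_mult)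
  finally show ?thesis
    unfolding nn_integral_noise_exponent by simp
qed

lemma char_fun_noise: "char_fun_vec M (\<epsilon> m) v = complex_of_real (exp (- noise_exponent v))"
proof -
  have "char_fun_vec M (\<epsilon> m) v = (\<integral>x. cis (inner v x) \<partial>distr M borel (\<epsilon> m))" for m
    unfolding char_fun_vec_def by (subst integral_distr) auto
  then show ?thesis using distr_noise[of m] char_fun_noise_0 by metis
qed

lemma char_fun_sum_noise:
  assumes F: "finite F"
  shows "(\<integral>\<omega>. cis (\<Sum>m\<in>F. inner (b m) (\<epsilon> m \<omega>)) \<partial>M) = complex_of_real (exp (- (\<Sum>m\<in>F. noise_exponent (b m))))"
proof -
  have ind: "indep_vars (\<lambda>_. borel) (\<lambda>m \<omega>. cis (inner (b m) (\<epsilon> m \<omega>))) F"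
    by (rule indep_vars_compose2[OF indep_vars_subset[OF indep_noise]]) auto
  have "(\<integral>\<omega>. cis (\<Sum>m\<in>F. inner (b m) (\<epsilon> m \<omega>)) \<partial>M) = (\<integral>\<omega>. (\<Prod>m\<in>F. cis (inner (b m) (\<epsilon> m \<omega>))) \<partial>M)"
    using F by (simp add: cis_conv_exp sum_distrib_left exp_sum)
  also have "\<dots> = (\<Prod>m\<in>F. (\<integral>\<omega>. cis (inner (b m) (\<epsilon> m \<omega>)) \<partial>M))"
    by (rule indep_vars_lebesgue_integral[OF F ind]) (auto intro!: integrable_const_bound[where B=1])
  also have "\<dots> = complex_of_real (exp (- (\<Sum>m\<in>F. noise_exponent (b m))))"
    using char_fun_noise F unfolding char_fun_vec_def by (simp add: exp_sum sum_negf[symmetric] of_real_prod)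
  finally show ?thesis .
qed

lemma char_noise_component:
  "char (distr M borel (\<lambda>\<omega>. \<epsilon> m \<omega> $ i)) \<theta> = complex_of_real (exp (- (\<bar>\<theta>\<bar> powr \<alpha> * noise_exponent (axis i 1))))"
proof -
  have "char (distr M borel (\<lambda>\<omega>. \<epsilon> m \<omega> $ i)) \<theta> = char_fun_vec M (\<epsilon> m) (\<theta> *\<^sub>R axis i 1)"
    unfolding char_def char_fun_vec_def by (subst integral_distr) (auto simp: cis_conv_exp inner_axis')
  then show ?thesis by (simp add: char_fun_noise noise_exponent_scaleR)
qed

lemma prob_noise_component_ge:
  assumes "0 < c"
  shows "prob {\<omega> \<in> space M. c \<le> \<bar>\<epsilon> m \<omega> $ i\<bar>} \<le> 2 * 2 powr \<alpha> * noise_exponent (axis i 1) * c powr - \<alpha>"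
proof -
  interpret D: real_distribution "distr M borel (\<lambda>\<omega>. \<epsilon> m \<omega> $ i)"
    by (simp add: real_distribution_def real_distribution_axioms_def prob_space_distr)
  have "prob {\<omega> \<in> space M. c \<le> \<bar>\<epsilon> m \<omega> $ i\<bar>} = D.prob {x. 2 / (2 / c) \<le> \<bar>x\<bar>}"
    using assms by (subst measure_distr) (auto simp: vimage_def Int_def conj_commute)
  also have "\<dots> \<le> 2 * noise_exponent (axis i 1) * (2 / c) powr \<alpha>"
    using assms by (intro D.prob_abs_ge_le_stable noise_exponent_nonneg \<alpha>(1) char_noise_component) simp
  also have "\<dots> = 2 * 2 powr \<alpha> * noise_exponent (axis i 1) * c powr - \<alpha>"
    using assms by (simp add: powr_divide powr_minus_divide)
  finally show ?thesis .
qed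

lemma AE_summable_noise_component:
  assumes "\<bar>r\<bar> < 1"
  shows "AE \<omega> in M. summable (\<lambda>k. r ^ k * (\<epsilon> (j k) \<omega> $ i))"
proof (rule AE_summable_geometric_weights[OF assms \<alpha>(1), where K = "2 * 2 powr \<alpha> * noise_exponent (axis i 1)"])
  show "(\<lambda>\<omega>. \<epsilon> (j k) \<omega> $ i) \<in> borel_measurable M" for k by measurable
qed (rule prob_noise_component_ge)

definition coef1 :: "int \<Rightarrow> int \<Rightarrow> real" where "coef1 s m = (if s \<le> m then \<rho>1 ^ nat (m - s) else 0)"
definition coef2 :: "int \<Rightarrow> int \<Rightarrow> real" where "coef2 s m = (if m \<le> s then \<rho>2 ^ nat (s - m) else 0)"

text \<open>\<open>X_vec = \<Sum>\<^sub>m coef_map m (\<epsilon> m)\<close>, and \<open>coef_adj u m\<close> is the transpose of \<open>coef_map m\<close>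
  applied to \<open>u\<close>.\<close>
definition coef_map :: "int \<Rightarrow> real^2 \<Rightarrow> real^4" where
  "coef_map m s = vector [coef1 t m * s$1, coef2 t m * s$2, coef1 (t+1) m * s$1, coef2 (t+1) m * s$2]"

definition coef_adj :: "real^4 \<Rightarrow> int \<Rightarrow> real^2" where
  "coef_adj u m = vector [u$1 * coef1 t m + u$3 * coef1 (t+1) m, u$2 * coef2 t m + u$4 * coef2 (t+1) m]"

definition X_vec :: "'a \<Rightarrow> real^4" where
  "X_vec \<omega> = vector [X1_proc \<rho>1 \<epsilon> t \<omega>, X2_proc \<rho>2 \<epsilon> t \<omega>, X1_proc \<rho>1 \<epsilon> (t + 1) \<omega>, X2_proc \<rho>2 \<epsilon> (t + 1) \<omega>]"

definition window :: "nat \<Rightarrow> int set" where "window n = {t - int n..t + int n}"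

lemma inner_coef_map: "inner u (coef_map m s) = inner (coef_adj u m) s"
  unfolding coef_map_def coef_adj_def inner_vec4 inner_vec2 by (simp add: algebra_simps)

lemma coef_map_uminus: "coef_map m (- s) = - coef_map m s"
  unfolding coef_map_def by (simp add: vec_eq_iff forall_4)

lemma measurable_coef_map[measurable]: "coef_map m \<in> borel_measurable borel"
  unfolding coef_map_def by measurable

lemma measurable_X_vec[measurable]: "X_vec \<in> borel_measurable M"
  unfolding X_vec_def X1_proc_def X2_proc_def by measurable

lemma tendsto_window_sum_inner_X_vec:
  assumes "summable (\<lambda>k. \<rho>1 ^ k * (\<epsilon> (t + int k) \<omega> $ 1))" "summable (\<lambda>k. \<rho>1 ^ k * (\<epsilon> (t + 1 + int k) \<omega> $ 1))"
    "summable (\<lambda>k. \<rho>2 ^ k * (\<epsilon> (t - int k) \<omega> $ 2))" "summable (\<lambda>k. \<rho>2 ^ k * (\<epsilon> (t + 1 - int k) \<omega> $ 2))"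
  shows "(\<lambda>n. \<Sum>m\<in>window n. inner (coef_adj u m) (\<epsilon> m \<omega>)) \<longlonglongrightarrow> inner u (X_vec \<omega>)"
proof -
  have "(\<Sum>m\<in>window n. inner (coef_adj u m) (\<epsilon> m \<omega>)) =
     u$1 * (\<Sum>m\<in>window n. coef1 t m * (\<epsilon> m \<omega> $ 1)) + u$2 * (\<Sum>m\<in>window n. coef2 t m * (\<epsilon> m \<omega> $ 2)) +
     u$3 * (\<Sum>m\<in>window n. coef1 (t+1) m * (\<epsilon> m \<omega> $ 1)) + u$4 * (\<Sum>m\<in>window n. coef2 (t+1) m * (\<epsilon> m \<omega> $ 2))" for n
    unfolding coef_adj_def inner_vec2 by (simp add: sum_distrib_left sum.distrib algebra_simps)
  moreover have "inner u (X_vec \<omega>) = u$1 * X1_proc \<rho>1 \<epsilon> t \<omega> + u$2 * X2_proc \<rho>2 \<epsilon> t \<omega> +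
      u$3 * X1_proc \<rho>1 \<epsilon> (t + 1) \<omega> + u$4 * X2_proc \<rho>2 \<epsilon> (t + 1) \<omega>"
    unfolding X_vec_def inner_vec4 by (simp add: mult.commute)
  moreover have "(\<lambda>n. \<Sum>m\<in>window n. coef1 s m * (\<epsilon> m \<omega> $ 1)) \<longlonglongrightarrow> X1_proc \<rho>1 \<epsilon> s \<omega>"
    if "summable (\<lambda>k. \<rho>1 ^ k * (\<epsilon> (s + int k) \<omega> $ 1))" for s
    unfolding window_def coef1_def X1_proc_def by (rule tendsto_window_sum_forward[OF that])
  moreover have "(\<lambda>n. \<Sum>m\<in>window n. coef2 s m * (\<epsilon> m \<omega> $ 2)) \<longlonglongrightarrow> X2_proc \<rho>2 \<epsilon> s \<omega>"
    if "summable (\<lambda>k. \<rho>2 ^ k * (\<epsilon> (s - int k) \<omega> $ 2))" for s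
    unfolding window_def coef2_def X2_proc_def by (rule tendsto_window_sum_backward[OF that])
  ultimately show ?thesis
    using assms by (simp only:) (intro tendsto_add tendsto_mult_left; blast)
qed

lemma tendsto_char_fun_window_sum:
  "(\<lambda>n. complex_of_real (exp (- (\<Sum>m\<in>window n. noise_exponent (coef_adj u m))))) \<longlonglongrightarrow> char_fun_vec M X_vec u"
proof -
  have "AE \<omega> in M. summable (\<lambda>k. \<rho>1 ^ k * (\<epsilon> (t + int k) \<omega> $ 1)) \<and>
      summable (\<lambda>k. \<rho>1 ^ k * (\<epsilon> (t + 1 + int k) \<omega> $ 1)) \<and>
      summable (\<lambda>k. \<rho>2 ^ k * (\<epsilon> (t - int k) \<omega> $ 2)) \<and> summable (\<lambda>k. \<rho>2 ^ k * (\<epsilon> (t + 1 - int k) \<omega> $ 2))"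
    using \<rho> by (intro AE_conjI AE_summable_noise_component) auto
  then have "AE \<omega> in M. (\<lambda>n. cis (\<Sum>m\<in>window n. inner (coef_adj u m) (\<epsilon> m \<omega>))) \<longlonglongrightarrow> cis (inner u (X_vec \<omega>))"
    by eventually_elim (intro tendsto_cis tendsto_window_sum_inner_X_vec; simp)
  then have "(\<lambda>n. \<integral>\<omega>. cis (\<Sum>m\<in>window n. inner (coef_adj u m) (\<epsilon> m \<omega>)) \<partial>M) \<longlonglongrightarrow> (\<integral>\<omega>. cis (inner u (X_vec \<omega>)) \<partial>M)"
    by (intro integral_dominated_convergence[where w = "\<lambda>_. 1"]) (auto simp: window_def)
  moreover have "(\<integral>\<omega>. cis (\<Sum>m\<in>window n. inner (coef_adj u m) (\<epsilon> m \<omega>)) \<partial>M) =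
      complex_of_real (exp (- (\<Sum>m\<in>window n. noise_exponent (coef_adj u m))))" for n
    by (rule char_fun_sum_noise) (simp add: window_def)
  ultimately show ?thesis unfolding char_fun_vec_def by simp
qed

definition Lambda :: "(real^4) measure" where "Lambda = sum_pushforward \<Gamma>2 coef_map"

definition X_exponent :: "real^4 \<Rightarrow> ennreal" where
  "X_exponent u = (\<integral>\<^sup>+ x. ennreal (\<bar>inner u x\<bar> powr \<alpha>) \<partial>Lambda)"

lemma sets_Lambda: "sets Lambda = sets borel"
  unfolding Lambda_def by (rule sets_sum_pushforward)

lemma nn_integral_Lambda:
  "h \<in> borel_measurable borel \<Longrightarrow>
    (\<integral>\<^sup>+ x. h x \<partial>Lambda) = (\<integral>\<^sup>+ m. (\<integral>\<^sup>+ s. h (coef_map m s) \<partial>\<Gamma>2) \<partial>count_space UNIV)"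
  unfolding Lambda_def using finite_Gamma2
  by (intro nn_integral_sum_pushforward[OF sets_Gamma2 _ measurable_coef_map])
     (auto simp: finite_measure_def)

lemma symmetric_Lambda: "symmetric_measure Lambda"
  unfolding Lambda_def using finite_Gamma2
  by (intro symmetric_sum_pushforward[OF sets_Gamma2 _ symmetric_measureI[OF sets_Gamma2 Gamma2_symmetric]
        measurable_coef_map coef_map_uminus])
     (auto simp: finite_measure_def)

lemma X_exponent_eq_sum:
  "X_exponent u = (\<integral>\<^sup>+ m. ennreal (noise_exponent (coef_adj u m)) \<partial>count_space UNIV)"
  unfolding X_exponent_def
  by (subst nn_integral_Lambda) (simp_all add: inner_coef_map nn_integral_noise_exponent)

lemma tendsto_window_sum_X_exponent:
  "(\<lambda>n. ennreal (\<Sum>m\<in>window n. noise_exponent (coef_adj u m))) \<longlonglongrightarrow> X_exponent u"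
  using tendsto_window_sum_nn_integral_count_space[of "\<lambda>m. ennreal (noise_exponent (coef_adj u m))" t]
  unfolding X_exponent_eq_sum window_def by (simp add: noise_exponent_nonneg)

definition rho_max :: real where "rho_max = max \<bar>\<rho>1\<bar> \<bar>\<rho>2\<bar>"

lemma rho_max_bounds: "0 < rho_max" "rho_max < 1" "\<bar>\<rho>1\<bar> \<le> rho_max" "\<bar>\<rho>2\<bar> \<le> rho_max"
  using \<rho> unfolding rho_max_def by auto

lemma abs_coef_le:
  assumes "s = t \<or> s = t + 1"
  shows "\<bar>coef1 s m\<bar> \<le> rho_max ^ nat \<bar>m - t\<bar> / rho_max" "\<bar>coef2 s m\<bar> \<le> rho_max ^ nat \<bar>m - t\<bar> / rho_max"
proof -
  have "rho_max ^ nat \<bar>m - s\<bar> * rho_max = rho_max ^ Suc (nat \<bar>m - s\<bar>)" by simp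
  also have "\<dots> \<le> rho_max ^ nat \<bar>m - t\<bar>"
    by (rule power_decreasing) (use assms rho_max_bounds in auto)
  finally have "rho_max ^ nat \<bar>m - s\<bar> \<le> rho_max ^ nat \<bar>m - t\<bar> / rho_max"
    using rho_max_bounds by (simp add: field_simps)
  moreover have "\<bar>coef1 s m\<bar> \<le> rho_max ^ nat \<bar>m - s\<bar>" "\<bar>coef2 s m\<bar> \<le> rho_max ^ nat \<bar>m - s\<bar>"
    unfolding coef1_def coef2_def using rho_max_bounds by (auto simp: power_abs intro!: power_mono)
  ultimately show "\<bar>coef1 s m\<bar> \<le> rho_max ^ nat \<bar>m - t\<bar> / rho_max" "\<bar>coef2 s m\<bar> \<le> rho_max ^ nat \<bar>m - t\<bar> / rho_max"
    by linarith+
qed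

lemma norm_coef_adj_le:
  "norm (coef_adj u m) \<le> (\<bar>u$1\<bar> + \<bar>u$2\<bar> + \<bar>u$3\<bar> + \<bar>u$4\<bar>) * (rho_max ^ nat \<bar>m - t\<bar> / rho_max)"
proof -
  define E where "E = rho_max ^ nat \<bar>m - t\<bar> / rho_max"
  have c: "\<bar>coef1 t m\<bar> \<le> E" "\<bar>coef1 (t+1) m\<bar> \<le> E" "\<bar>coef2 t m\<bar> \<le> E" "\<bar>coef2 (t+1) m\<bar> \<le> E"
    unfolding E_def by (auto intro: abs_coef_le)
  have "norm (coef_adj u m) \<le> \<bar>coef_adj u m $ 1\<bar> + \<bar>coef_adj u m $ 2\<bar>"
    using norm_le_l1_cart[of "coef_adj u m"] by (simp add: sum_2)
  also have "\<bar>coef_adj u m $ 1\<bar> \<le> \<bar>u$1\<bar> * E + \<bar>u$3\<bar> * E"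
    unfolding coef_adj_def using c
    by (simp, intro order_trans[OF abs_triangle_ineq] add_mono) (auto simp: abs_mult intro: mult_left_mono)
  also have "\<bar>coef_adj u m $ 2\<bar> \<le> \<bar>u$2\<bar> * E + \<bar>u$4\<bar> * E"
    unfolding coef_adj_def using c
    by (simp, intro order_trans[OF abs_triangle_ineq] add_mono) (auto simp: abs_mult intro: mult_left_mono)
  finally show ?thesis unfolding E_def by (simp add: algebra_simps)
qed

lemma window_sum_noise_exponent_le:
  fixes u :: "real^4"
  defines "U \<equiv> (\<bar>u$1\<bar> + \<bar>u$2\<bar> + \<bar>u$3\<bar> + \<bar>u$4\<bar>) / rho_max"
  shows "(\<Sum>m\<in>window n. noise_exponent (coef_adj u m)) \<le>
    measure \<Gamma>2 (space \<Gamma>2) * U powr \<alpha> * (2 / (1 - rho_max powr \<alpha>))"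
proof -
  define K where "K = measure \<Gamma>2 (space \<Gamma>2)"
  have U: "0 \<le> U" unfolding U_def using rho_max_bounds by simp
  have q: "0 \<le> rho_max powr \<alpha>" "rho_max powr \<alpha> < 1" using rho_max_bounds \<alpha> powr_less_mono2[of \<alpha> rho_max 1] by auto
  have "noise_exponent (coef_adj u m) \<le> K * U powr \<alpha> * (rho_max powr \<alpha>) ^ nat \<bar>m - t\<bar>" for m
  proof -
    have "norm (coef_adj u m) \<le> U * rho_max ^ nat \<bar>m - t\<bar>"
      using norm_coef_adj_le[of u m] unfolding U_def by (simp add: field_simps)
    then have "norm (coef_adj u m) powr \<alpha> \<le> (U * rho_max ^ nat \<bar>m - t\<bar>) powr \<alpha>"
      using \<alpha> by (intro powr_mono2) auto
    also have "\<dots> = U powr \<alpha> * (rho_max powr \<alpha>) ^ nat \<bar>m - t\<bar>"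
      using U rho_max_bounds by (simp add: powr_mult powr_realpow[symmetric] powr_powr powr_power mult.commute)
    finally show ?thesis
      using noise_exponent_le_norm[of "coef_adj u m"] mult_right_mono[of _ _ K]
      unfolding K_def by (smt (verit) measure_nonneg mult.commute mult.left_commute)
  qed
  then have "(\<Sum>m\<in>window n. noise_exponent (coef_adj u m)) \<le> K * U powr \<alpha> * (\<Sum>m\<in>window n. (rho_max powr \<alpha>) ^ nat \<bar>m - t\<bar>)"
    by (simp add: sum_distrib_left sum_mono)
  also have "\<dots> \<le> K * U powr \<alpha> * (2 / (1 - rho_max powr \<alpha>))"
    by (intro mult_left_mono sum_power_abs_diff_le q) (auto simp: K_def window_def)
  finally show ?thesis unfolding K_def .
qed

lemma X_exponent_finite: "X_exponent u < \<infinity>"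
proof -
  have "X_exponent u \<le> ennreal (measure \<Gamma>2 (space \<Gamma>2) *
      ((\<bar>u$1\<bar> + \<bar>u$2\<bar> + \<bar>u$3\<bar> + \<bar>u$4\<bar>) / rho_max) powr \<alpha> * (2 / (1 - rho_max powr \<alpha>)))"
    using LIMSEQ_le_const2[OF tendsto_window_sum_X_exponent[of u]] window_sum_noise_exponent_le[of u]
    by (metis ennreal_leI)
  then show ?thesis by (simp add: le_less_trans)
qed

lemma char_fun_X_vec: "char_fun_vec M X_vec u = complex_of_real (exp (- enn2real (X_exponent u)))"
proof -
  have "(\<lambda>n. enn2real (ennreal (\<Sum>m\<in>window n. noise_exponent (coef_adj u m)))) \<longlonglongrightarrow> enn2real (X_exponent u)"
    by (rule tendsto_enn2real)
       (use tendsto_window_sum_X_exponent[of u] X_exponent_finite[of u] in \<open>auto simp: less_top\<close>)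
  then have "(\<lambda>n. complex_of_real (exp (- (\<Sum>m\<in>window n. noise_exponent (coef_adj u m)))))
      \<longlonglongrightarrow> complex_of_real (exp (- enn2real (X_exponent u)))"
    by (intro tendsto_intros) (simp add: noise_exponent_nonneg sum_nonneg)
  then show ?thesis using LIMSEQ_unique[OF tendsto_char_fun_window_sum] by blast
qed

definition Gamma_sphere :: "(real^4) measure" where "Gamma_sphere = radial_projection \<alpha> norm Lambda"

lemma represents_on_sphere: "represents_on (sphere 0 1) \<alpha> Gamma_sphere M X_vec"
proof -
  have "sphere (0::real^4) 1 = {x. norm x = 1}" by auto
  moreover have "restricted_moment \<alpha> {x. norm x \<noteq> 0} Lambda u = X_exponent u" for u
    using restricted_moment_nonzero[OF \<alpha>(1)] by (simp add: X_exponent_def)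
  ultimately show ?thesis
    unfolding Gamma_sphere_def
    using norm.represents_on_radial_projection[OF measurable_X_vec sets_Lambda symmetric_Lambda \<alpha>(1)]
      X_exponent_finite char_fun_X_vec
    by simp
qed

lemma finite_Gamma_sphere: "finite_measure Gamma_sphere"
proof (rule finite_measureI)
  have "emeasure Gamma_sphere (space Gamma_sphere) = (\<integral>\<^sup>+ x. ennreal (norm x powr \<alpha>) \<partial>Lambda)"
    unfolding Gamma_sphere_def using norm.emeasure_radial_projection_UNIV[OF sets_Lambda]
    by (simp add: sets_eq_imp_space_eq[OF norm.sets_radial_projection])
  also have "\<dots> \<le> (\<integral>\<^sup>+ x. ennreal (4 powr \<alpha>) * (ennreal (\<bar>x$1\<bar> powr \<alpha>) + ennreal (\<bar>x$2\<bar> powr \<alpha>)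
        + ennreal (\<bar>x$3\<bar> powr \<alpha>) + ennreal (\<bar>x$4\<bar> powr \<alpha>)) \<partial>Lambda)"
    using norm_powr_le_sum_abs_powr[OF \<alpha>(1)]
    by (intro nn_integral_mono) (simp add: ennreal_mult[symmetric] flip: ennreal_plus)
  also have "\<dots> = ennreal (4 powr \<alpha>) *
      (X_exponent (axis 1 1) + X_exponent (axis 2 1) + X_exponent (axis 3 1) + X_exponent (axis 4 1))"
    unfolding X_exponent_def
    by (simp add: inner_axis' nn_integral_cmult nn_integral_add measurable_cong_sets[OF sets_Lambda refl])
  also have "\<dots> < \<infinity>" using X_exponent_finite by (simp add: ennreal_mult_less_top)
  finally show "emeasure Gamma_sphere (space Gamma_sphere) \<noteq> \<infinity>" by simp
qed

definition poles :: "(real^2) set" where "poles = {vector [0, -1], vector [0, 1]}"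

lemma mem_poles_iff: "s \<in> sphere 0 1 \<Longrightarrow> s \<in> poles \<longleftrightarrow> s $ 1 = 0"
proof -
  assume "s \<in> sphere 0 1"
  then have "(s$1)\<^sup>2 + (s$2)\<^sup>2 = 1" using power2_norm_eq_inner[of s] by (simp add: inner_vec2 power2_eq_square)
  then show ?thesis unfolding poles_def by (auto simp: vec_eq_iff forall_2 power2_eq_1_iff)
qed

text \<open>The \<open>(x\<^sub>1, x\<^sub>2)\<close>-part of \<open>coef_map m s\<close> vanishes without \<open>coef_map m s\<close> vanishing only for
  \<open>m = t + 1\<close> and \<open>s\<close> a pole, where \<open>coef_map (t + 1) s = (0, 0, 0, s\<^sub>2)\<close>.\<close>
lemma coef_map_eq_0_if_seminorm12_eq_0:
  assumes "s \<in> sphere 0 1" "s \<notin> poles" "seminorm12 (coef_map m s) = 0"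
  shows "coef_map m s = 0"
proof -
  have s1: "coef1 t m * s$1 = 0" and s2: "coef2 t m * s$2 = 0"
    using assms(3) unfolding seminorm12_def coef_map_def by (auto simp: add_nonneg_eq_0_iff)
  have "coef1 (t+1) m * s$1 = 0"
    using s1 \<rho> by (cases "t + 1 \<le> m") (auto simp: coef1_def)
  moreover have "coef2 (t+1) m * s$2 = 0"
  proof (cases "m \<le> t")
    case False
    moreover have "s $ 1 \<noteq> 0" using assms mem_poles_iff by blast
    ultimately show ?thesis using s1 \<rho> by (cases "m = t + 1") (auto simp: coef1_def coef2_def)
  qed (use s2 \<rho> in \<open>auto simp: coef2_def\<close>)
  ultimately show ?thesis
    using s1 s2 unfolding coef_map_def by (simp add: vec_eq_iff forall_4)
qed

definition Gamma_cyl :: "(real^4) measure" where "Gamma_cyl = radial_projection \<alpha> seminorm12 Lambda"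

lemma represents_on_cyl4:
  assumes "emeasure \<Gamma>2 poles = 0"
  shows "represents_on cyl4 \<alpha> Gamma_cyl M X_vec"
proof -
  have "AE s in \<Gamma>2. s \<notin> poles"
    using assms sets_Gamma2 unfolding poles_def by (intro AE_not_in) auto
  then have "(\<integral>\<^sup>+ s. ennreal (indicator {x. seminorm12 x \<noteq> 0} (coef_map m s) * \<bar>inner u (coef_map m s)\<bar> powr \<alpha>) \<partial>\<Gamma>2)
      = (\<integral>\<^sup>+ s. ennreal (\<bar>inner u (coef_map m s)\<bar> powr \<alpha>) \<partial>\<Gamma>2)" for m u
    using AE_Gamma2_sphere
  proof (intro nn_integral_cong_AE, eventually_elim)
    case (elim s)
    then show ?case using coef_map_eq_0_if_seminorm12_eq_0[of s m] by (auto simp: indicator_def)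
  qed
  then have "restricted_moment \<alpha> {x. seminorm12 x \<noteq> 0} Lambda u = X_exponent u" for u
    unfolding restricted_moment_def X_exponent_def
    by (subst (1 2) nn_integral_Lambda) (simp_all add: seminorm12_def)
  then show ?thesis
    unfolding Gamma_cyl_def cyl4_def
    using seminorm12.represents_on_radial_projection[OF measurable_X_vec sets_Lambda symmetric_Lambda \<alpha>(1)]
      X_exponent_finite char_fun_X_vec
    by simp
qed

lemma poles_le_restricted_moment_Lambda:
  "emeasure \<Gamma>2 poles \<le> restricted_moment \<alpha> {x. x $ 1 = 0 \<and> x $ 2 = 0} Lambda (axis 4 1)"
proof -
  let ?f = "\<lambda>x::real^4. ennreal (indicator {x. x $ 1 = 0 \<and> x $ 2 = 0} x * \<bar>inner (axis 4 1) x\<bar> powr \<alpha>)"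
  have "emeasure \<Gamma>2 poles = (\<integral>\<^sup>+ s. indicator poles s \<partial>\<Gamma>2)"
    using sets_Gamma2 unfolding poles_def by simp
  also have "\<dots> \<le> (\<integral>\<^sup>+ s. ?f (coef_map (t + 1) s) \<partial>\<Gamma>2)"
    by (intro nn_integral_mono)
       (auto simp: poles_def coef_map_def coef1_def coef2_def inner_axis' split: split_indicator)
  also have "\<dots> \<le> (\<integral>\<^sup>+ m. (\<integral>\<^sup>+ s. ?f (coef_map m s) \<partial>\<Gamma>2) \<partial>count_space UNIV)"
    by (rule le_nn_integral_count_space)
  also have "\<dots> = restricted_moment \<alpha> {x. x $ 1 = 0 \<and> x $ 2 = 0} Lambda (axis 4 1)"
    unfolding restricted_moment_def by (subst nn_integral_Lambda) auto
  finally show ?thesis .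
qed

lemma poles_null_if_represents_on_cyl4:
  assumes "represents_on cyl4 \<alpha> \<Gamma> M X_vec"
  shows "emeasure \<Gamma>2 poles = 0"
proof -
  have sets: "sets \<Gamma> = sets borel" and null: "emeasure \<Gamma> (- cyl4) = 0"
    using assms unfolding represents_on_def sym_borel_measure_on_def by auto
  have "(\<integral>\<^sup>+ x. ennreal (\<bar>inner u x\<bar> powr \<alpha>) \<partial>\<Gamma>) = (\<integral>\<^sup>+ x. ennreal (\<bar>inner u x\<bar> powr \<alpha>) \<partial>Lambda)" for u
    using represents_on_moment_eq[OF assms char_fun_X_vec X_exponent_finite] by (simp add: X_exponent_def)
  then have "restricted_moment \<alpha> {x. x $ 1 = 0 \<and> x $ 2 = 0} \<Gamma> (axis 4 1) =
      restricted_moment \<alpha> {x. x $ 1 = 0 \<and> x $ 2 = 0} Lambda (axis 4 1)"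
    using X_exponent_finite unfolding X_exponent_def
    by (intro restricted_moment_coordinate_plane_eq[OF sets_Lambda sets \<alpha>])
  moreover have "restricted_moment \<alpha> {x. x $ 1 = 0 \<and> x $ 2 = 0} \<Gamma> (axis 4 1) = 0"
  proof (rule restricted_moment_null[OF sets])
    show "emeasure \<Gamma> {x. x $ 1 = 0 \<and> x $ 2 = 0} = 0"
      by (rule emeasure_eq_0[of "- cyl4"]) (use null sets in \<open>auto simp: cyl4_def seminorm12_def\<close>)
  qed simp
  ultimately show ?thesis using poles_le_restricted_moment_Lambda by simp
qed

end

theorem proposition8:
  fixes M :: "'a measure" and \<alpha> \<rho>1 \<rho>2 :: real
    and \<epsilon> :: "int \<Rightarrow> 'a \<Rightarrow> real^2" and \<Gamma>2 :: "(real^2) measure"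
  assumes "prob_space M"
    and "0 < \<alpha>" "\<alpha> < 2"
    and "0 < \<bar>\<rho>1\<bar>" "\<bar>\<rho>1\<bar> < 1" "0 < \<bar>\<rho>2\<bar>" "\<bar>\<rho>2\<bar> < 1"
    and "\<And>t. \<epsilon> t \<in> borel_measurable M"
    and "prob_space.indep_vars M (\<lambda>_. borel) \<epsilon> UNIV"
    and "\<And>t. distr M borel (\<epsilon> t) = distr M borel (\<epsilon> 0)"
    and "SaS_spectral \<alpha> \<Gamma>2 M (\<epsilon> 0)"
  defines "Xv \<equiv> (\<lambda>t \<omega>. vector [X1_proc \<rho>1 \<epsilon> t \<omega>, X2_proc \<rho>2 \<epsilon> t \<omega>,
                  X1_proc \<rho>1 \<epsilon> (t + 1) \<omega>, X2_proc \<rho>2 \<epsilon> (t + 1) \<omega>] :: real^4)"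
  shows "\<forall>t. SaS \<alpha> M (Xv t) \<and>
             (representable_on cyl4 \<alpha> M (Xv t) \<longleftrightarrow>
                emeasure \<Gamma>2 {vector [0, -1], vector [0, 1]} = 0)"
proof
  fix t
  interpret X: SaS_AR_pair M \<alpha> \<rho>1 \<rho>2 \<epsilon> \<Gamma>2 t
    by (rule SaS_AR_pair.intro) (rule assms)+
  have "Xv t = X.X_vec"
    unfolding Xv_def X.X_vec_def ..
  moreover have "SaS \<alpha> M X.X_vec"
    unfolding SaS_def SaS_spectral_def using X.finite_Gamma_sphere X.represents_on_sphere by blast
  moreover have "representable_on cyl4 \<alpha> M X.X_vec \<longleftrightarrow> emeasure \<Gamma>2 X.poles = 0"
    unfolding representable_on_def using X.represents_on_cyl4 X.poles_null_if_represents_on_cyl4 by blast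
  ultimately show "SaS \<alpha> M (Xv t) \<and>
      (representable_on cyl4 \<alpha> M (Xv t) \<longleftrightarrow> emeasure \<Gamma>2 {vector [0, -1], vector [0, 1]} = 0)"
    unfolding X.poles_def by simp
qed

end
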